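(* Let $G$, $C_n$, $\pi$, $S$ be as in the standing setup below, write $n=p_1^{k_1}\cdots p_m^{k_m}$, and assume the exponent of $2$ in $n$ is not equal to $2$. Then: (1) If $G$ is a Roquette group, then $S$ contains no non-trivial subgroup of the form $\langle\alpha_p\rangle$ with $p$ a prime dividing $n$ (i.e. $\alpha_p\notin S$ for every prime $p$ with $p^2\mid n$). (2) If for every prime $p_j$ dividing $n$ the projection $S_{p_j}$ of $S$ to $\mathrm{Aut}(C_{p_j^{k_j}})$ does not contain a non-trivial subgroup $\langle\alpha_{p_j}\rangle$ (where $\alpha_{p_j}$ is viewed as the automorphism $x\mapsto x^{1+p_j^{k_j-1}}$ of $C_{p_j^{k_j}}$), then $G$ has no non-trivial expansive subgroup with trivial $G$-core. (3) If $G$ has no non-trivial expansive subgroup with trivial $G$-core, then $G$ is a Roquette group.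
   Context: Standing setup: $G$ is a finite group, $C_n$ is a normal cyclic subgroup of $G$ of order $n$ with $C_G(C_n)=C_n$, and $\pi:G\to\mathrm{Aut}(C_n)$ sends $g$ to the automorphism $c\mapsto gcg^{-1}$ of $C_n$; thus $\ker\pi=C_n$ and $S:=\pi(G)\cong G/C_n$, giving an exact sequence $1\to C_n\to G\to S\to1$. Write $C_n=\prod_iC_{p_i^{k_i}}$ (Sylow subgroups) and $\mathrm{Aut}(C_n)=\prod_i\mathrm{Aut}(C_{p_i^{k_i}})$. For a prime $p\mid n$ with exponent $k$ in $n$, let $g_p$ generate $C_{p^k}$ and let $\alpha_p\in\mathrm{Aut}(C_n)$ be given by $\alpha_p(g_p)=g_p^{1+p^{k-1}}$ and the identity on the other Sylow subgroups; $\alpha_p$ has order $p$ if $k>1$ and is trivial if $k=1$. A finite group is Roquette if all its normal abelian subgroups are cyclic. For $X\le H$, the $H$-core of $X$ is $\bigcap_{h\in H}hXh^{-1}$. A subgroup $T\le G$ is expansive if for every $g\in G\setminus N_G(T)$, the $N_G(T)$-core of $(gTg^{-1}\cap N_G(T))T$ contains $T$ properly; non-trivial means $T\ne1$. *)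

theory Defs
  imports "HOL-Algebra.Algebra" "HOL-Number_Theory.Number_Theory"
begin

definition centralizer :: "('a, 'b) monoid_scheme \<Rightarrow> 'a set \<Rightarrow> 'a set" where
  "centralizer G Y = {g \<in> carrier G. \<forall>x\<in>Y. monoid.mult G g x = monoid.mult G x g}"

definition core :: "('a, 'b) monoid_scheme \<Rightarrow> 'a set \<Rightarrow> 'a set \<Rightarrow> 'a set" where
  "core G H Y = (\<Inter>h\<in>H. h <#\<^bsub>G\<^esub> Y #>\<^bsub>G\<^esub> inv\<^bsub>G\<^esub> h)"

definition expansive :: "('a, 'b) monoid_scheme \<Rightarrow> 'a set \<Rightarrow> bool" where
  "expansive G T \<longleftrightarrow> subgroup T G \<and>
     (\<forall>g \<in> carrier G - normalizer G T.
        T \<subset> core G (normalizer G T)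
               (((g <#\<^bsub>G\<^esub> T #>\<^bsub>G\<^esub> inv\<^bsub>G\<^esub> g) \<inter> normalizer G T) <#>\<^bsub>G\<^esub> T))"

definition roquette :: "('a, 'b) monoid_scheme \<Rightarrow> bool" where
  "roquette G \<longleftrightarrow> (\<forall>A. A \<lhd> G \<and> (\<forall>x\<in>A. \<forall>y\<in>A. monoid.mult G x y = monoid.mult G y x)
                      \<longrightarrow> cyclic_group (subgroup_generated G A))"

definition sylow_part :: "('a, 'b) monoid_scheme \<Rightarrow> 'a set \<Rightarrow> nat \<Rightarrow> 'a set" where
  "sylow_part G C p = {c \<in> C. c [^]\<^bsub>G\<^esub> (p ^ multiplicity p (card C)) = \<one>\<^bsub>G\<^esub>}"

(* the automorphism alpha_p of C: x \<mapsto> x^(1+p^(k-1)) on the Sylow p-part, identity on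
   the other Sylow parts; on the cyclic group C it is the power map c \<mapsto> c^e with
   e = 1 + p^(k-1) mod p^k and e = 1 mod n/p^k (any such e gives the same map) *)
definition alpha_exp :: "nat \<Rightarrow> nat \<Rightarrow> nat" where
  "alpha_exp n p = (SOME e. [e = 1 + p ^ (multiplicity p n - 1)] (mod p ^ multiplicity p n)
                          \<and> [e = 1] (mod (n div p ^ multiplicity p n)))"

definition alpha_aut :: "('a, 'b) monoid_scheme \<Rightarrow> 'a set \<Rightarrow> nat \<Rightarrow> 'a \<Rightarrow> 'a" where
  "alpha_aut G C p = (\<lambda>c. c [^]\<^bsub>G\<^esub> alpha_exp (card C) p)"

(* pi(g) is conjugation c \<mapsto> g c g^-1 on C; "phi \<in> S = pi(G)" *)
definition in_image_pi :: "('a, 'b) monoid_scheme \<Rightarrow> 'a set \<Rightarrow> ('a \<Rightarrow> 'a) \<Rightarrow> bool" where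
  "in_image_pi G C \<phi> \<longleftrightarrow> (\<exists>g\<in>carrier G. \<forall>c\<in>C. monoid.mult G (monoid.mult G g c) (inv\<^bsub>G\<^esub> g) = \<phi> c)"

end

theory Submission
  imports Defs
begin

lemma square_dvd_one_plus_power_minus_linear:
  fixes z :: int
  shows "z^2 dvd (1 + z)^i - 1 - int i * z"
proof (induction i)
  case (Suc i)
  then obtain Q where Q: "(1 + z)^i - 1 - int i * z = z^2 * Q" by (auto elim: dvdE)
  have "(1 + z)^Suc i - 1 - int (Suc i) * z = (1 + z) * ((1 + z)^i - 1 - int i * z) + int i * z^2"
    by (simp add: algebra_simps power2_eq_square)
  also have "\<dots> = z^2 * ((1 + z) * Q + int i)" unfolding Q by (simp add: algebra_simps)
  finally show ?case by simp
qed simp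

lemma cube_dvd_one_plus_power_minus_quadratic:
  fixes z :: int
  shows "z^3 dvd (1 + z)^i - 1 - int i * z - int (i choose 2) * z^2"
proof (induction i)
  case (Suc i)
  then obtain Q where Q: "(1 + z)^i - 1 - int i * z - int (i choose 2) * z^2 = z^3 * Q"
    by (auto elim: dvdE)
  have "Suc i choose 2 = i + (i choose 2)" by (simp add: numeral_2_eq_2)
  then have "(1 + z)^Suc i - 1 - int (Suc i) * z - int (Suc i choose 2) * z^2
        = (1 + z) * ((1 + z)^i - 1 - int i * z - int (i choose 2) * z^2) + int (i choose 2) * z^3"
    by (simp add: algebra_simps power2_eq_square power3_eq_cube)
  also have "\<dots> = z^3 * ((1 + z) * Q + int (i choose 2))" unfolding Q by (simp add: algebra_simps)
  finally show ?case by simp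
qed (simp add: numeral_2_eq_2)

text \<open>Raising \<open>1 + p^v y\<close> with \<open>p \<nmid> y\<close> to the \<open>p\<close>-th power raises the exponent of \<open>p\<close>
  in the difference to 1 by exactly one; for \<open>p = 2\<close> this needs \<open>v \<ge> 2\<close>, because
  \<open>(1 + 2y)^2 = 1 + 4y(1 + y)\<close>.\<close>

lemma one_plus_prime_power_pow_prime:
  fixes p v :: nat and y :: int
  assumes p: "Factorial_Ring.prime p" and v: "v \<ge> 1" and v2: "p = 2 \<Longrightarrow> v \<ge> 2" and y: "\<not> int p dvd y"
  obtains y' where "(1 + int p^v * y)^p = 1 + int p^(v + 1) * y'" and "\<not> int p dvd y'"
proof -
  define z where "z = int p^v * y"
  obtain Q where Q: "(1 + z)^p - 1 - int p * z - int (p choose 2) * z^2 = z^3 * Q"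
    using cube_dvd_one_plus_power_minus_quadratic[of z p] by (auto elim: dvdE)
  have quadratic: "int p^(v + 2) dvd int (p choose 2) * z^2"
  proof (cases "p = 2")
    case True
    then have "int p^(v + 2) dvd int p^(2 * v)" using v2 by (intro le_imp_power_dvd) simp
    also have "\<dots> dvd z^2" by (simp add: z_def power_mult_distrib power_mult[symmetric] mult.commute)
    finally show ?thesis by simp
  next
    case False
    then have "p > 2" using prime_ge_2_nat[OF p] by simp
    then have "int p dvd int (p choose 2)" using p by (simp add: dvd_choose_prime)
    have "int p^(v + 2) dvd int p^Suc (2 * v)" using v by (intro le_imp_power_dvd) simp
    also have "\<dots> = int p * int p^(2 * v)" by simp
    also have "\<dots> dvd int (p choose 2) * z^2"
      using \<open>int p dvd int (p choose 2)\<close>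
      by (intro mult_dvd_mono) (simp_all add: z_def power_mult_distrib power_mult[symmetric] mult.commute)
    finally show ?thesis .
  qed
  have cubic: "int p^(v + 2) dvd z^3 * Q"
  proof -
    have "int p^(v + 2) dvd int p^(3 * v)" using v by (intro le_imp_power_dvd) simp
    also have "\<dots> dvd z^3" by (simp add: z_def power_mult_distrib power_mult[symmetric] mult.commute)
    finally show ?thesis by simp
  qed
  obtain W where W: "int (p choose 2) * z^2 + z^3 * Q = int p^(v + 2) * W"
    using dvd_add[OF quadratic cubic] by (auto elim: dvdE)
  have "(1 + z)^p = 1 + int p^(v + 1) * (y + int p * W)"
    using Q W by (simp add: z_def algebra_simps power_add)
  moreover have "\<not> int p dvd y + int p * W"
    using y by (simp add: dvd_add_left_iff)
  ultimately show thesis using that unfolding z_def by blast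
qed

lemma one_plus_prime_power_pow_prime_power:
  fixes p v j :: nat and y :: int
  assumes p: "Factorial_Ring.prime p" and v: "v \<ge> 1" and v2: "p = 2 \<Longrightarrow> v \<ge> 2" and y: "\<not> int p dvd y"
  obtains y' where "(1 + int p^v * y)^(p^j) = 1 + int p^(v + j) * y'" and "\<not> int p dvd y'"
proof (induction j arbitrary: thesis)
  case 0
  then show ?case using y by (simp add: "0"[of y])
next
  case (Suc j)
  obtain yj where yj: "(1 + int p^v * y)^(p^j) = 1 + int p^(v + j) * yj" "\<not> int p dvd yj"
    using Suc.IH by blast
  have "v + j \<ge> 1" "p = 2 \<Longrightarrow> v + j \<ge> 2" using v v2 by auto
  then obtain y' where y': "(1 + int p^(v + j) * yj)^p = 1 + int p^(v + j + 1) * y'" "\<not> int p dvd y'"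
    using one_plus_prime_power_pow_prime[OF p _ _ yj(2)] by blast
  have "(1 + int p^v * y)^(p^Suc j) = ((1 + int p^v * y)^(p^j))^p"
    by (simp add: power_mult[symmetric] mult.commute)
  also have "\<dots> = 1 + int p^(v + Suc j) * y'" using yj(1) y'(1) by simp
  finally show ?case using Suc.prems y'(2) by blast
qed

lemma exists_power_cong_one_plus_prime_power:
  fixes p k :: nat and w :: int
  assumes p: "Factorial_Ring.prime p" and k: "k \<ge> 2" and w: "\<not> int p dvd w"
  obtains M where "[(1 + int p^(k - 1) * w)^M = 1 + int p^(k - 1)] (mod int p^k)"
proof -
  have "Factorial_Ring.prime (int p)" using p by simp
  then have "coprime w (int p)" using w prime_imp_coprime coprime_commute by blast
  then obtain M' where M': "[w * M' = 1] (mod int p)" using cong_solve_coprime_int by blast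
  define m where "m = nat (M' mod int p)"
  have "[int m = M'] (mod int p)" using p by (simp add: m_def cong_def prime_gt_0_nat)
  then have wM: "[w * int m = 1] (mod int p)" using M' cong_scalar_left cong_trans by blast
  define x where "x = int p^(k - 1) * w"
  have "int p^k dvd int p^(2 * (k - 1))" using k by (intro le_imp_power_dvd) simp
  also have "\<dots> dvd x^2" by (simp add: x_def power_mult_distrib power_mult[symmetric] mult.commute)
  finally have "[(1 + x)^m = 1 + int m * x] (mod int p^k)"
    using square_dvd_one_plus_power_minus_linear[of x m] dvd_trans
    by (auto simp: cong_iff_dvd_diff algebra_simps)
  moreover obtain R where "w * int m - 1 = int p * R"
    using wM by (auto simp: cong_iff_dvd_diff elim!: dvdE)
  then have "int m * x - int p^(k - 1) = int p^k * R"
    using k by (simp add: x_def algebra_simps power_Suc[symmetric] flip: mult.assoc)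
  then have "[1 + int m * x = 1 + int p^(k - 1)] (mod int p^k)"
    by (simp add: cong_iff_dvd_diff)
  ultimately show thesis using that unfolding x_def by (blast intro: cong_trans)
qed

lemma power_cong_one_plus_prime_power_of_dvd_square:
  fixes n e :: nat
  assumes sq: "n dvd (e - 1)^2" and not_dvd: "\<not> n dvd e - 1" and two: "multiplicity (2::nat) n \<noteq> 2"
  obtains p M where "Factorial_Ring.prime p" "p^2 dvd n"
    "[e^M = 1 + p^(multiplicity p n - 1)] (mod p^multiplicity p n)"
proof -
  have e: "e - 1 \<noteq> 0" using not_dvd by auto
  with sq have n: "n \<noteq> 0" by (metis dvd_0_left_iff power_not_zero)
  obtain p where p: "Factorial_Ring.prime p" and "\<not> multiplicity p n \<le> multiplicity p (e - 1)"
    using multiplicity_le_imp_dvd[of n "e - 1"] n not_dvd by auto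
  define k where "k = multiplicity p n"
  define v where "v = multiplicity p (e - 1)"
  have "v < k" using \<open>\<not> multiplicity p n \<le> _\<close> by (simp add: k_def v_def)
  have "p^k dvd (e - 1)^2" using sq dvd_trans multiplicity_dvd k_def by blast
  then have "k \<le> multiplicity p ((e - 1)^2)"
    using e p by (subst (asm) power_dvd_iff_le_multiplicity) (auto simp: prime_gt_1_nat)
  also have "\<dots> = 2 * v"
    using e p by (simp add: v_def prime_elem_multiplicity_power_distrib)
  finally have "k \<le> 2 * v" .
  with \<open>v < k\<close> have v: "v \<ge> 1" and k: "k \<ge> 2" by linarith+
  have "p^2 dvd n"
    using k n p by (subst power_dvd_iff_le_multiplicity) (auto simp: k_def)
  have v2: "v \<ge> 2" if "p = 2"
    using that two \<open>k \<le> 2 * v\<close> \<open>v < k\<close> by (auto simp: k_def)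
  have "\<not> is_unit p" using prime_gt_1_nat[OF p] by simp
  then obtain y where y: "e - 1 = p^v * y" "\<not> p dvd y"
    using multiplicity_decompose'[OF e] unfolding v_def by blast
  then have "e = 1 + p^v * y" using e by linarith
  then have "int e = 1 + int p^v * int y" by simp
  moreover obtain w where w: "(1 + int p^v * int y)^(p^(k - 1 - v)) = 1 + int p^(k - 1) * w"
    and "\<not> int p dvd w"
    using one_plus_prime_power_pow_prime_power[OF p v v2, of "int y" "k - 1 - v"] y(2) \<open>v < k\<close>
    by auto
  moreover obtain M where "[(1 + int p^(k - 1) * w)^M = 1 + int p^(k - 1)] (mod int p^k)"
    using exists_power_cong_one_plus_prime_power[OF p k \<open>\<not> int p dvd w\<close>] .
  ultimately have "[int (e^(p^(k - 1 - v) * M)) = int (1 + p^(k - 1))] (mod int (p^k))"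
    by (simp add: power_mult)
  then show thesis
    using that[OF p \<open>p^2 dvd n\<close>] unfolding k_def cong_int_iff by blast
qed

lemma alpha_exp_cong:
  assumes p: "Factorial_Ring.prime p" and n: "n > 0"
  shows "[alpha_exp n p = 1 + p^(multiplicity p n - 1)] (mod p^multiplicity p n)"
    and "[alpha_exp n p = 1] (mod n div p^multiplicity p n)"
proof -
  have "\<not> p dvd n div p^multiplicity p n"
    using multiplicity_decompose[of n p] n prime_gt_1_nat[OF p] by simp
  then have "coprime (p^multiplicity p n) (n div p^multiplicity p n)"
    using prime_imp_coprime[OF p] by simp
  then have "\<exists>e. [e = 1 + p^(multiplicity p n - 1)] (mod p^multiplicity p n)
              \<and> [e = 1] (mod n div p^multiplicity p n)"
    by (rule binary_chinese_remainder_nat)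
  from someI_ex[OF this] show "[alpha_exp n p = 1 + p^(multiplicity p n - 1)] (mod p^multiplicity p n)"
    and "[alpha_exp n p = 1] (mod n div p^multiplicity p n)"
    unfolding alpha_exp_def by blast+
qed

context
  fixes p n :: nat
  assumes prime: "Factorial_Ring.prime p" and n: "n > 0" and sq_dvd: "p^2 dvd n"
    and two: "p = 2 \<Longrightarrow> multiplicity p n \<noteq> 2"
begin

private lemma alpha_exp_decompose:
  obtains k m y where "k = multiplicity p n" "k \<ge> 2" "n = p^k * m" "coprime p m" "\<not> int p dvd y"
    "int (alpha_exp n p) - 1 = int p^(k - 1) * y" "[alpha_exp n p = 1] (mod m)"
proof -
  define k where "k = multiplicity p n"
  define m where "m = n div p^k"
  define e where "e = alpha_exp n p"
  have p1: "p > 1" using prime_gt_1_nat[OF prime] .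
  then have k: "k \<ge> 2" using sq_dvd n by (simp add: k_def power_dvd_iff_le_multiplicity)
  have "\<not> p dvd m" unfolding m_def k_def using multiplicity_decompose[of n p] n p1 by simp
  then have "coprime p m" using prime_imp_coprime[OF prime] by blast
  have nm: "n = p^k * m" unfolding m_def k_def by (simp add: multiplicity_dvd)
  have pk: "p^k = p * p^(k - 1)" using k by (cases k) auto
  have "2 * p^(k - 1) \<le> p * p^(k - 1)" using p1 by (intro mult_le_mono1) simp
  moreover have "p^(k - 1) > 1" using p1 k by (intro one_less_power) auto
  ultimately have "1 + p^(k - 1) < p^k" using pk by linarith
  moreover have "[e = 1 + p^(k - 1)] (mod p^k)" using alpha_exp_cong(1)[OF prime n] by (simp add: e_def k_def)
  ultimately have "e mod p^k = 1 + p^(k - 1)" by (simp add: cong_def)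
  moreover obtain q where "e = p^k * q + e mod p^k" using mult_div_mod_eq[of "p^k" e] by metis
  ultimately have "e = 1 + p^(k - 1) * (1 + p * q)" using pk by (simp add: algebra_simps)
  then have "int e - 1 = int p^(k - 1) * (1 + int p * int q)" by (simp add: algebra_simps)
  moreover have "\<not> int p dvd 1 + int p * int q"
    using p1 by (simp add: dvd_add_left_iff)
  moreover have "[e = 1] (mod m)" using alpha_exp_cong(2)[OF prime n] by (simp add: e_def m_def k_def)
  ultimately show thesis using that k nm \<open>coprime p m\<close> unfolding e_def k_def by blast
qed

lemma alpha_exp_pow_prime_cong_one: "[alpha_exp n p ^ p = 1] (mod n)"
proof -
  obtain k m y where k: "k = multiplicity p n" "k \<ge> 2" and nm: "n = p^k * m" and "coprime p m"
    and y: "\<not> int p dvd y" and ey: "int (alpha_exp n p) - 1 = int p^(k - 1) * y"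
    and em: "[alpha_exp n p = 1] (mod m)"
    by (rule alpha_exp_decompose)
  have "k - 1 \<ge> 1" "p = 2 \<Longrightarrow> k - 1 \<ge> 2" using k two by auto
  then obtain y' where "(1 + int p^(k - 1) * y)^p = 1 + int p^(k - 1 + 1) * y'"
    using one_plus_prime_power_pow_prime[OF prime _ _ y] by blast
  then have "[int (alpha_exp n p ^ p) = 1] (mod int (p^k))"
    using ey k(2) by (simp add: cong_iff_dvd_diff algebra_simps)
  then have "[alpha_exp n p ^ p = 1] (mod p^k)" by (metis cong_int_iff of_nat_1)
  moreover have "[alpha_exp n p ^ p = 1] (mod m)" using cong_pow[OF em] by simp
  ultimately show ?thesis
    using \<open>coprime p m\<close> nm by (simp add: coprime_cong_mult_nat)
qed

lemma prime_dvd_of_dvd_mult_alpha_exp_minus_one: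
  assumes "int n dvd t * (int (alpha_exp n p) - 1)"
  shows "int p dvd t"
proof -
  obtain k m y where k: "k \<ge> 2" and nm: "n = p^k * m" and y: "\<not> int p dvd y"
    and ey: "int (alpha_exp n p) - 1 = int p^(k - 1) * y"
    by (rule alpha_exp_decompose)
  have "int p^k dvd int n" using nm by simp
  then have "int p^k dvd t * (int (alpha_exp n p) - 1)" using assms by (rule dvd_trans)
  moreover have "int p^k = int p^(k - 1) * int p" using k by (cases k) auto
  ultimately have "int p^(k - 1) * int p dvd int p^(k - 1) * (t * y)"
    using ey by (simp add: ac_simps)
  then have "int p dvd t * y" using prime_gt_0_nat[OF prime] by simp
  then show ?thesis using y prime by (simp add: prime_dvd_mult_iff)
qed

lemma alpha_exp_not_cong_one: "\<not> [alpha_exp n p = 1] (mod n)"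
proof
  assume "[alpha_exp n p = 1] (mod n)"
  then have "int n dvd 1 * (int (alpha_exp n p) - 1)"
    by (simp add: cong_int_iff[symmetric] cong_iff_dvd_diff)
  then have "int p dvd 1" by (rule prime_dvd_of_dvd_mult_alpha_exp_minus_one)
  then show False using prime by simp
qed

lemma alpha_exp_geometric_sum:
  obtains s where "(\<Sum>j<p. alpha_exp n p ^ j) = p * s" "coprime s n"
proof -
  obtain k m y where k: "k = multiplicity p n" "k \<ge> 2" and nm: "n = p^k * m" and "coprime p m"
    and y: "\<not> int p dvd y" and ey: "int (alpha_exp n p) - 1 = int p^(k - 1) * y"
    and em: "[alpha_exp n p = 1] (mod m)"
    by (rule alpha_exp_decompose)
  define e where "e = int (alpha_exp n p)"
  define \<sigma> where "\<sigma> = (\<Sum>j<p. e^j)"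
  have pk: "int p^k = int p * int p^(k - 1)" using k(2) by (cases k) auto
  have p0: "int p^(k - 1) \<noteq> 0" using prime_gt_0_nat[OF prime] by simp
  have "k - 1 \<ge> 1" "p = 2 \<Longrightarrow> k - 1 \<ge> 2" using k two by auto
  then obtain y' where y': "(1 + int p^(k - 1) * y)^p = 1 + int p^(k - 1 + 1) * y'" "\<not> int p dvd y'"
    using one_plus_prime_power_pow_prime[OF prime _ _ y] by blast
  have "int p^(k - 1) * (y * \<sigma>) = (e - 1) * \<sigma>" using ey by (simp add: e_def)
  also have "\<dots> = e^p - 1" unfolding \<sigma>_def by (rule power_diff_1_eq[symmetric])
  also have "\<dots> = int p^(k - 1) * (int p * y')"
    using y'(1) ey k(2) pk by (simp add: e_def algebra_simps)
  finally have y\<sigma>: "y * \<sigma> = int p * y'" by (simp only: mult_left_cancel[OF p0])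
  have pint: "Factorial_Ring.prime (int p)" using prime by simp
  moreover have "int p dvd y * \<sigma>" unfolding y\<sigma> by simp
  ultimately have "int p dvd \<sigma>" using y by (simp add: prime_dvd_mult_iff)
  then obtain s where s: "\<sigma> = int p * s" by (auto elim: dvdE)
  then have "y' = y * s" using y\<sigma> prime_gt_0_nat[OF prime] by (simp add: algebra_simps)
  then have "\<not> int p dvd s" using y'(2) by auto
  then have cop_pk: "coprime s (int p^k)"
    using prime_imp_coprime[OF pint] by (simp add: coprime_commute)
  have "[\<sigma> = (\<Sum>j<p. 1)] (mod int m)"
  proof -
    have "[e = 1] (mod int m)" using em by (metis cong_int_iff of_nat_1 e_def)
    then show ?thesis unfolding \<sigma>_def using cong_pow by (intro cong_sum) fastforce
  qed
  then have "[int p * s = int p * 1] (mod int m)" using s by simp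
  moreover have "coprime (int p) (int m)" using \<open>coprime p m\<close> by simp
  ultimately have "[s = 1] (mod int m)" using cong_mult_lcancel by blast
  then have "coprime s (int m)" by (metis cong_imp_coprime cong_sym coprime_1_left)
  with cop_pk have "coprime s (int n)" using nm by simp
  moreover have \<sigma>: "\<sigma> = int (\<Sum>j<p. alpha_exp n p ^ j)" by (simp add: \<sigma>_def e_def)
  then have "int p * s \<ge> 0" using s by (metis of_nat_0_le_iff)
  then have "s \<ge> 0" using prime_gt_0_nat[OF prime] by (simp add: zero_le_mult_iff)
  then obtain s' where "s = int s'" using nonneg_int_cases by blast
  ultimately show thesis using that[of s'] s \<sigma> by (metis of_nat_eq_iff of_nat_mult coprime_int_iff)
qed

lemma alpha_exp_fixes_order_prime: "[n div p * alpha_exp n p = n div p] (mod n)"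
proof -
  obtain k m y where k: "k \<ge> 2" and nm: "n = p^k * m"
    and ey: "int (alpha_exp n p) - 1 = int p^(k - 1) * y"
    by (rule alpha_exp_decompose)
  have pk: "p^k = p * p^(k - 1)" using k by (cases k) auto
  then have np: "n div p = p^(k - 1) * m" using nm prime_gt_0_nat[OF prime] by simp
  have "int p^k dvd int p^(k - 1) * int p^(k - 1)"
    using k by (simp add: le_imp_power_dvd flip: power_add)
  then have "int p^k * int m dvd int p^(k - 1) * int p^(k - 1) * (int m * y)"
    by (rule mult_dvd_mono) simp
  moreover have "int (n div p) * (int (alpha_exp n p) - 1) = int p^(k - 1) * int p^(k - 1) * (int m * y)"
    using np ey by (simp add: ac_simps)
  ultimately have "int n dvd int (n div p) * (int (alpha_exp n p) - 1)"
    using nm by simp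
  then show ?thesis
    by (simp add: cong_int_iff[symmetric] cong_iff_dvd_diff algebra_simps)
qed

end

lemma mem_conjugate_iff: "y \<in> g <#\<^bsub>G\<^esub> Y #>\<^bsub>G\<^esub> inv\<^bsub>G\<^esub> g \<longleftrightarrow> (\<exists>t\<in>Y. y = g \<otimes>\<^bsub>G\<^esub> t \<otimes>\<^bsub>G\<^esub> inv\<^bsub>G\<^esub> g)"
  unfolding l_coset_def r_coset_def by auto

lemma mem_core_iff: "y \<in> core G H Y \<longleftrightarrow> (\<forall>h\<in>H. y \<in> h <#\<^bsub>G\<^esub> Y #>\<^bsub>G\<^esub> inv\<^bsub>G\<^esub> h)"
  unfolding core_def by auto

lemma mem_set_mult_iff: "y \<in> A <#>\<^bsub>G\<^esub> B \<longleftrightarrow> (\<exists>x\<in>A. \<exists>t\<in>B. y = x \<otimes>\<^bsub>G\<^esub> t)"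
  unfolding set_mult_def by auto

definition power_products :: "('a, 'b) monoid_scheme \<Rightarrow> 'a \<Rightarrow> 'a \<Rightarrow> 'a set" where
  "power_products G x y = {x [^]\<^bsub>G\<^esub> (i::nat) \<otimes>\<^bsub>G\<^esub> y [^]\<^bsub>G\<^esub> (j::nat) | i j. True}"

context group
begin

lemma mult_inv_mult_cancel [simp]: "x \<in> carrier G \<Longrightarrow> y \<in> carrier G \<Longrightarrow> x \<otimes> (inv x \<otimes> y) = y"
  by (simp add: m_assoc[symmetric])

lemma inv_mult_mult_cancel [simp]: "x \<in> carrier G \<Longrightarrow> y \<in> carrier G \<Longrightarrow> inv x \<otimes> (x \<otimes> y) = y"
  by (simp add: m_assoc[symmetric])

lemma mem_normalizer_iff:
  assumes "T \<subseteq> carrier G"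
  shows "g \<in> normalizer G T \<longleftrightarrow> g \<in> carrier G \<and> g <# T #> inv g = T"
  using assms unfolding normalizer_def stabilizer_def by auto

lemma conj_mem_of_mem_normalizer:
  assumes "T \<subseteq> carrier G" "g \<in> normalizer G T" "t \<in> T"
  shows "g \<otimes> t \<otimes> inv g \<in> T"
proof -
  have "g <# T #> inv g = T" using assms(1,2) by (simp add: mem_normalizer_iff)
  then show ?thesis using assms(3) by (metis mem_conjugate_iff)
qed

lemma nat_pow_eq_iff_cong:
  assumes "x \<in> carrier G"
  shows "x [^] (i::nat) = x [^] j \<longleftrightarrow> [i = j] (mod ord x)"
  using int_pow_eq[OF assms, of "int i" "int j"]
  by (simp add: int_pow_int cong_int_iff[symmetric] cong_iff_dvd_diff dvd_diff_commute)

lemma mem_generate_singleton_iff: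
  assumes "finite (carrier G)" "d \<in> carrier G"
  shows "w \<in> generate G {d} \<longleftrightarrow> (\<exists>k::nat. w = d [^] k)"
  using generate_pow_on_finite_carrier[OF assms] by auto

lemma subgroup_nat_pow_closed:
  assumes "subgroup H G" "h \<in> H"
  shows "h [^] (k::nat) \<in> H"
  using subgroup_int_pow_closed[OF assms, of "int k"] by (simp add: int_pow_int)

lemma conj_nat_pow:
  assumes "x \<in> carrier G" "c \<in> carrier G"
  shows "x \<otimes> c [^] (i::nat) \<otimes> inv x = (x \<otimes> c \<otimes> inv x) [^] i"
proof (induction i)
  case 0
  then show ?case using assms by simp
next
  case (Suc i)
  have "x \<otimes> c [^] Suc i \<otimes> inv x = (x \<otimes> c [^] i \<otimes> inv x) \<otimes> (x \<otimes> c \<otimes> inv x)"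
    using assms by (simp add: m_assoc)
  then show ?case using Suc by simp
qed

lemma commutes_with_generate:
  assumes "c \<in> carrier G" "t \<in> carrier G" "c \<otimes> t = t \<otimes> c" "w \<in> generate G {t}"
  shows "c \<otimes> w = w \<otimes> c"
  using assms(4)
proof (induction rule: generate.induct)
  case (inv h)
  have "inv t \<otimes> (c \<otimes> t) \<otimes> inv t = inv t \<otimes> (t \<otimes> c) \<otimes> inv t" using assms(3) by simp
  then have "inv t \<otimes> c = c \<otimes> inv t" using assms(1,2) by (simp add: m_assoc)
  then show ?case using inv by simp
next
  case (eng h1 h2)
  moreover have "h1 \<in> carrier G" "h2 \<in> carrier G"
    using eng generate_in_carrier[of "{t}"] assms(2) by auto
  ultimately show ?case using assms(1) by (metis m_assoc)
qed (use assms in auto)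

lemma commuting_in_normalizer_generate:
  assumes t: "t \<in> carrier G" and c: "c \<in> carrier G" and ct: "c \<otimes> t = t \<otimes> c"
  shows "c \<in> normalizer G (generate G {t})"
proof -
  have T: "generate G {t} \<subseteq> carrier G" using generate_incl t by blast
  have conj: "c \<otimes> w \<otimes> inv c = w" if "w \<in> generate G {t}" for w
    using commutes_with_generate[OF c t ct that] that T c by (auto simp: m_assoc)
  have "c <#\<^bsub>G\<^esub> generate G {t} #> inv c = generate G {t}"
    unfolding set_eq_iff mem_conjugate_iff using conj by metis
  then show ?thesis using mem_normalizer_iff[OF T] c by blast
qed

lemma ord_dvd_of_mem_generate:
  assumes fin: "finite (carrier G)" and d: "d \<in> carrier G" and w: "w \<in> generate G {d}"
  shows "ord w dvd ord d"
proof -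
  obtain k :: nat where k: "w = d [^] k" using w mem_generate_singleton_iff[OF fin d] by blast
  then have "w [^] ord d = \<one>" using d by (simp add: nat_pow_pow pow_eq_id)
  then show ?thesis using d k by (simp add: pow_eq_id)
qed

lemma ord_pow_ord_div:
  assumes d: "d \<in> carrier G" and "q dvd ord d" and "ord d > 0"
  shows "ord (d [^] (ord d div q)) = q"
proof -
  have dq: "ord d = q * (ord d div q)" using assms(2) by simp
  then have "ord d div q dvd ord d" by (metis dvd_triv_right)
  moreover have "ord d div q > 0" using assms(3) dq by (metis gr0I mult_0_right less_not_refl)
  ultimately have "ord (d [^] (ord d div q)) = ord d div (ord d div q)" using ord_pow[OF d] by simp
  with dq show ?thesis using assms(3) by (metis div_mult_self1_is_m nat_0_less_mult_iff mult.commute)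
qed

lemma obtain_pow_of_pow_eq_one_in_generate:
  assumes fin: "finite (carrier G)" and d: "d \<in> carrier G" and q: "q dvd ord d" "q > 0"
    and w: "w \<in> generate G {d}" "w [^] q = \<one>"
  obtains l :: nat where "w = (d [^] (ord d div q)) [^] l"
proof -
  obtain j :: nat where j: "w = d [^] j" using w(1) mem_generate_singleton_iff[OF fin d] by blast
  then have "ord d dvd j * q" using w(2) d by (simp add: nat_pow_pow pow_eq_id)
  then have "q * (ord d div q) dvd q * j" using q(1) by (simp add: mult.commute)
  then have "ord d div q dvd j" using q(2) by simp
  then obtain l where "j = ord d div q * l" by (auto elim: dvdE)
  then show thesis using that j d by (simp add: nat_pow_pow)
qed

text \<open>In a cyclic group the elements of prime exponent \<open>q\<close> form a group of order \<open>q\<close>,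
  generated by any of its non-trivial elements.\<close>

lemma obtain_pow_of_prime_exponent_in_generate:
  assumes fin: "finite (carrier G)" and d: "d \<in> carrier G" and q: "Factorial_Ring.prime (q::nat)"
    and v: "v \<in> generate G {d}" "v [^] q = \<one>" "v \<noteq> \<one>" and w: "w \<in> generate G {d}" "w [^] q = \<one>"
  obtains s :: nat where "w = v [^] s"
proof -
  have vc: "v \<in> carrier G" using v(1) generate_incl d by blast
  have "ord v dvd q" using v(2) vc by (simp add: pow_eq_id)
  moreover have "ord v \<noteq> 1" using v(3) ord_eq_1[OF vc] by simp
  ultimately have "ord v = q" using q by (auto simp: prime_nat_iff)
  then have qd: "q dvd ord d" using ord_dvd_of_mem_generate[OF fin d v(1)] by simp
  have q0: "q > 0" using prime_gt_0_nat[OF q] .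
  define z where "z = d [^] (ord d div q)"
  have zc: "z \<in> carrier G" unfolding z_def using d by simp
  have ord_z: "ord z = q" unfolding z_def using ord_pow_ord_div[OF d qd] ord_ge_1[OF fin d] by simp
  obtain u :: nat where u: "v = z [^] u"
    using obtain_pow_of_pow_eq_one_in_generate[OF fin d qd q0 v(1,2)] unfolding z_def by blast
  obtain t :: nat where t: "w = z [^] t"
    using obtain_pow_of_pow_eq_one_in_generate[OF fin d qd q0 w] unfolding z_def by blast
  have "\<not> q dvd u" using v(3) u zc ord_z by (simp add: pow_eq_id)
  then have "coprime u q" using prime_imp_coprime[OF q] coprime_commute by blast
  then obtain x where "[u * x = 1] (mod q)" using cong_solve_coprime_nat by auto
  then have "[u * x * t = 1 * t] (mod q)" by (rule cong_scalar_right)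
  then have "w = v [^] (x * t)"
    using t u zc ord_z nat_pow_eq_iff_cong[OF zc, of "u * x * t" t] by (simp add: nat_pow_pow mult.assoc)
  then show thesis by (rule that)
qed

lemma ord_mult_coprime:
  assumes x: "x \<in> carrier G" and y: "y \<in> carrier G" and xy: "x \<otimes> y = y \<otimes> x"
    and cop: "coprime (ord x) (ord y)"
  shows "ord (x \<otimes> y) = ord x * ord y"
proof (rule dvd_antisym)
  show "ord (x \<otimes> y) dvd ord x * ord y" by (rule ord_mul_divides[OF xy x y])
  define K where "K = ord (x \<otimes> y)"
  have K: "x [^] k \<otimes> y [^] k = \<one>" if "K dvd k" for k :: nat
    using that pow_mult_distrib[OF xy x y, of k] pow_eq_id[of "x \<otimes> y" k] x y by (simp add: K_def)
  have "y [^] (K * ord y) = \<one>" using y by (simp add: pow_eq_id)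
  then have "x [^] (K * ord y) = \<one>" using K[of "K * ord y"] x y by simp
  then have "ord x dvd K" using cop x by (simp add: pow_eq_id coprime_dvd_mult_left_iff)
  moreover have "x [^] (K * ord x) = \<one>" using x by (simp add: pow_eq_id)
  then have "y [^] (K * ord x) = \<one>" using K[of "K * ord x"] x y by simp
  then have "ord y dvd K" using cop y by (simp add: pow_eq_id coprime_dvd_mult_left_iff coprime_commute)
  ultimately show "ord x * ord y dvd K" using cop by (rule divides_mult)
qed

text \<open>In a finite abelian group the order of every element divides the maximal order: otherwise
  a prime \<open>r\<close> occurs to a higher power in some \<open>ord y\<close>, and combining the \<open>r\<close>-part of \<open>y\<close>
  with the \<open>r'\<close>-part of \<open>x\<close> gives an element of larger order.\<close>

lemma ord_dvd_of_max_ord: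
  assumes fin: "finite (carrier G)" and A: "subgroup A G"
    and ab: "\<And>u v. u \<in> A \<Longrightarrow> v \<in> A \<Longrightarrow> u \<otimes> v = v \<otimes> u"
    and x: "x \<in> A" and x_max: "\<And>z. z \<in> A \<Longrightarrow> ord z \<le> ord x" and y: "y \<in> A"
  shows "ord y dvd ord x"
proof (rule ccontr)
  assume "\<not> ord y dvd ord x"
  have xc: "x \<in> carrier G" and yc: "y \<in> carrier G" using subgroup.mem_carrier[OF A] x y by auto
  have ox: "ord x > 0" using ord_ge_1[OF fin xc] by simp
  have oy: "ord y > 0" using ord_ge_1[OF fin yc] by simp
  obtain r where r: "Factorial_Ring.prime r" and "\<not> multiplicity r (ord y) \<le> multiplicity r (ord x)"
    using multiplicity_le_imp_dvd[of "ord y" "ord x"] oy \<open>\<not> ord y dvd ord x\<close> by auto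
  moreover define i j where "i = multiplicity r (ord x)" and "j = multiplicity r (ord y)"
  ultimately have "i < j" by simp
  have r1: "r > 1" using prime_gt_1_nat[OF r] .
  define m where "m = ord x div r^i"
  have xm: "ord x = r^i * m" unfolding m_def i_def by (simp add: multiplicity_dvd)
  have "\<not> r dvd m" unfolding m_def i_def using multiplicity_decompose[of "ord x" r] ox r1 by simp
  then have cop: "coprime m (r^j)" using prime_imp_coprime[OF r] by (simp add: coprime_commute)
  define x1 y1 where "x1 = x [^] (r^i)" and "y1 = y [^] (ord y div r^j)"
  have "ord x1 = m" unfolding x1_def m_def using ord_pow[OF xc] xm r1 by simp
  moreover have "ord y1 = r^j"
    unfolding y1_def j_def using ord_pow_ord_div[OF yc multiplicity_dvd oy] .
  moreover have "x1 \<in> A" "y1 \<in> A" unfolding x1_def y1_def using subgroup_nat_pow_closed[OF A] x y by auto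
  ultimately have "ord (x1 \<otimes> y1) = m * r^j" "x1 \<otimes> y1 \<in> A"
    using ord_mult_coprime[OF _ _ ab] cop subgroup.mem_carrier[OF A] subgroup.m_closed[OF A] by auto
  moreover have "ord x < m * r^j"
    using xm \<open>i < j\<close> r1 ox by (simp add: power_strict_increasing mult.commute)
  ultimately show False using x_max by fastforce
qed

text \<open>If a finite abelian group is not generated by an element \<open>x\<close> of maximal order, then some
  element of prime exponent lies outside \<open>\<langle>x\<rangle>\<close>: take \<open>y \<notin> \<langle>x\<rangle>\<close> of minimal order and a
  prime \<open>q\<close> dividing \<open>ord y\<close>; then \<open>y\<^sup>q = x\<^sup>q\<^sup>k\<close>, and \<open>y x\<^sup>-\<^sup>k\<close> is such an element.\<close>

lemma obtain_prime_exponent_outside_generate: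
  assumes fin: "finite (carrier G)" and A: "subgroup A G"
    and ab: "\<And>u v. u \<in> A \<Longrightarrow> v \<in> A \<Longrightarrow> u \<otimes> v = v \<otimes> u"
    and x: "x \<in> A" and ord_dvd: "\<And>z. z \<in> A \<Longrightarrow> ord z dvd ord x" and "\<not> A \<subseteq> generate G {x}"
  obtains w and q :: nat where "w \<in> A" "Factorial_Ring.prime q" "w [^] q = \<one>" "w \<notin> generate G {x}"
proof -
  have xc: "x \<in> carrier G" using subgroup.mem_carrier[OF A x] .
  have X: "w \<in> generate G {x} \<longleftrightarrow> (\<exists>k::nat. w = x [^] k)" for w
    using mem_generate_singleton_iff[OF fin xc] .
  define S where "S = A - generate G {x}"
  have "finite S" "S \<noteq> {}"
    unfolding S_def using \<open>\<not> A \<subseteq> _\<close> fin subgroup.subset[OF A] finite_subset by auto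
  then have "Min (ord ` S) \<in> ord ` S" by simp
  then obtain y where yS: "y \<in> S" and "ord y = Min (ord ` S)" by (metis imageE)
  with \<open>finite S\<close> have y_min: "ord y \<le> ord z" if "z \<in> S" for z using that by simp
  have yA: "y \<in> A" and y_notin: "y \<notin> generate G {x}" using yS unfolding S_def by auto
  have yc: "y \<in> carrier G" using subgroup.mem_carrier[OF A yA] .
  have "y \<noteq> \<one>" using y_notin generate.one by auto
  then have "ord y \<noteq> 1" using ord_eq_1[OF yc] by simp
  then obtain q where q: "Factorial_Ring.prime q" "q dvd ord y" using prime_factor_nat by blast
  have "ord (y [^] q) < ord y"
    using ord_pow[OF yc q(2)] prime_gt_1_nat[OF q(1)] ord_ge_1[OF fin yc] by simp
  then have "y [^] q \<in> generate G {x}"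
    using y_min subgroup_nat_pow_closed[OF A yA] unfolding S_def by fastforce
  then obtain k :: nat where k: "y [^] q = x [^] k" using X by blast
  have "q dvd ord x" using q(2) ord_dvd[OF yA] by (rule dvd_trans)
  then obtain m where m: "ord x = q * m" by (auto elim: dvdE)
  have "x [^] (k * m) = (y [^] q) [^] m" using k xc by (simp add: nat_pow_pow)
  also have "\<dots> = y [^] ord x" using m yc by (simp add: nat_pow_pow)
  also have "\<dots> = \<one>" using ord_dvd[OF yA] yc by (simp add: pow_eq_id)
  finally have "q * m dvd k * m" using m xc by (simp add: pow_eq_id)
  moreover have "m > 0" using m ord_ge_1[OF fin xc] by (cases m) auto
  ultimately obtain k' where k': "k = q * k'" by (auto elim: dvdE)
  define w where "w = y \<otimes> inv (x [^] k')"
  have xkA: "x [^] k' \<in> A" using subgroup_nat_pow_closed[OF A x] .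
  then have wA: "w \<in> A" unfolding w_def using A yA by (simp add: subgroup.m_closed subgroup.m_inv_closed)
  have "w [^] q = y [^] q \<otimes> inv (x [^] k') [^] q"
    unfolding w_def using pow_mult_distrib ab[OF yA subgroup.m_inv_closed[OF A xkA]] yc xc by simp
  also have "inv (x [^] k') [^] q = inv (x [^] k)"
    using xc k' by (simp add: nat_pow_inv[symmetric] nat_pow_pow mult.commute)
  also have "y [^] q \<otimes> inv (x [^] k) = \<one>" using k xc by simp
  finally have "w [^] q = \<one>" .
  moreover have "w \<notin> generate G {x}"
  proof
    assume "w \<in> generate G {x}"
    then obtain l :: nat where "w = x [^] l" using X by blast
    then have "y = x [^] (l + k')" unfolding w_def using yc xc by (simp add: nat_pow_mult inv_solve_right')
    with y_notin X show False by blast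
  qed
  ultimately show thesis using that wA q(1) by blast
qed

lemma cyclic_group_subgroup_generated_iff:
  assumes H: "subgroup H G"
  shows "cyclic_group (subgroup_generated G H) \<longleftrightarrow> (\<exists>x\<in>H. H = generate G {x})"
proof
  interpret SG: group "subgroup_generated G H" by simp
  have cH: "carrier (subgroup_generated G H) = H" using subgroup.carrier_subgroup_generated_subgroup[OF H] .
  assume "cyclic_group (subgroup_generated G H)"
  then obtain x where x: "x \<in> carrier (subgroup_generated G H)"
    and "carrier (subgroup_generated G H) = range (\<lambda>n::int. x [^]\<^bsub>subgroup_generated G H\<^esub> n)"
    using SG.cyclic_group by blast
  then have "H = range (\<lambda>n::int. x [^] n)" using cH int_pow_subgroup_generated[OF x] by simp
  also have "\<dots> = generate G {x}" using generate_pow x cH subgroup.mem_carrier[OF H] by auto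
  finally show "\<exists>x\<in>H. H = generate G {x}" using x cH by blast
next
  assume "\<exists>x\<in>H. H = generate G {x}"
  then obtain x where x: "x \<in> H" and Hx: "H = generate G {x}" by blast
  have "generate G (carrier G \<inter> H) = H"
    using subgroup.carrier_subgroup_generated_subgroup[OF H] carrier_subgroup_generated[of G H] by simp
  moreover have "carrier G \<inter> {x} = {x}" using x subgroup.mem_carrier[OF H] by auto
  ultimately have "subgroup_generated G H = subgroup_generated G {x}"
    unfolding subgroup_generated_def by (metis Hx)
  then show "cyclic_group (subgroup_generated G H)" using cyclic_group_generated by simp
qed

lemma cyclic_of_prime_exponent_in_cyclic:
  assumes fin: "finite (carrier G)" and A: "subgroup A G"
    and ab: "\<And>u v. u \<in> A \<Longrightarrow> v \<in> A \<Longrightarrow> u \<otimes> v = v \<otimes> u"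
    and d: "d \<in> carrier G"
    and prime_exponent: "\<And>w q. w \<in> A \<Longrightarrow> Factorial_Ring.prime (q::nat) \<Longrightarrow> w [^] q = \<one> \<Longrightarrow> w \<in> generate G {d}"
  shows "cyclic_group (subgroup_generated G A)"
proof -
  have "finite A" using fin subgroup.subset[OF A] finite_subset by blast
  moreover have "A \<noteq> {}" using subgroup.one_closed[OF A] by blast
  ultimately have "Max (ord ` A) \<in> ord ` A" by simp
  then obtain x where x: "x \<in> A" and "ord x = Max (ord ` A)" by (metis imageE)
  with \<open>finite A\<close> have x_max: "ord z \<le> ord x" if "z \<in> A" for z using that by simp
  have xc: "x \<in> carrier G" using subgroup.mem_carrier[OF A x] .
  have ord_dvd: "ord z dvd ord x" if "z \<in> A" for z using ord_dvd_of_max_ord[OF fin A ab x x_max that] .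
  have "A \<subseteq> generate G {x}"
  proof (rule ccontr)
    assume "\<not> A \<subseteq> generate G {x}"
    then obtain w and q :: nat where w: "w \<in> A" "Factorial_Ring.prime q" "w [^] q = \<one>" "w \<notin> generate G {x}"
      using obtain_prime_exponent_outside_generate[OF fin A ab x ord_dvd] by blast
    have wc: "w \<in> carrier G" using subgroup.mem_carrier[OF A w(1)] .
    have "w \<noteq> \<one>" using w(4) generate.one by auto
    then have "ord w = q" using w(2,3) ord_eq_1[OF wc] pow_eq_id[OF wc] by (auto simp: prime_nat_iff)
    then have qx: "q dvd ord x" using ord_dvd[OF w(1)] by simp
    define z where "z = x [^] (ord x div q)"
    have zc: "z \<in> carrier G" and zA: "z \<in> A"
      unfolding z_def using xc subgroup_nat_pow_closed[OF A x] by auto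
    have "ord z = q" unfolding z_def using ord_pow_ord_div[OF xc qx] ord_ge_1[OF fin xc] by simp
    then have "z [^] q = \<one>" "z \<noteq> \<one>"
      using pow_ord_eq_1[OF zc] ord_eq_1[OF zc] prime_gt_1_nat[OF w(2)] by auto
    then obtain s :: nat where "w = z [^] s"
      using obtain_pow_of_prime_exponent_in_generate[OF fin d w(2) prime_exponent[OF zA w(2)] _ _
          prime_exponent[OF w(1,2,3)] w(3)] by blast
    then have "w = x [^] (ord x div q * s)" unfolding z_def using xc by (simp add: nat_pow_pow)
    with w(4) show False using mem_generate_singleton_iff[OF fin xc] by blast
  qed
  moreover have "generate G {x} \<subseteq> A" using x A by (intro generate_subgroup_incl) auto
  ultimately show ?thesis using x cyclic_group_subgroup_generated_iff[OF A] by blast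
qed

lemma conj_eq_iff_commute:
  assumes "x \<in> carrier G" "y \<in> carrier G"
  shows "x \<otimes> y \<otimes> inv x = y \<longleftrightarrow> x \<otimes> y = y \<otimes> x"
  using inv_solve_right'[of y "x \<otimes> y" x] assms by simp

lemma commutator_eq_one_iff:
  assumes "x \<in> carrier G" "y \<in> carrier G"
  shows "x \<otimes> y \<otimes> inv x \<otimes> inv y = \<one> \<longleftrightarrow> x \<otimes> y = y \<otimes> x"
proof
  assume "x \<otimes> y \<otimes> inv x \<otimes> inv y = \<one>"
  then have "(x \<otimes> y \<otimes> inv x \<otimes> inv y) \<otimes> (y \<otimes> x) = y \<otimes> x" using assms by simp
  then show "x \<otimes> y = y \<otimes> x" using assms by (simp add: m_assoc)
qed (use assms in \<open>simp add: m_assoc\<close>)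

lemma generator_pow_of_prime_exponent:
  assumes fin: "finite (carrier G)" and t: "t \<in> carrier G" and p: "Factorial_Ring.prime (p::nat)"
    and tp: "t [^] p = \<one>" and w: "w \<in> generate G {t}" "w \<noteq> \<one>"
  obtains j :: nat where "w [^] j = t"
proof -
  have wc: "w \<in> carrier G" using w(1) generate_incl t by blast
  have "ord w dvd p" using ord_dvd_of_mem_generate[OF fin t w(1)] tp t by (simp add: pow_eq_id dvd_trans)
  then have "w [^] p = \<one>" using wc by (simp add: pow_eq_id)
  then show thesis
    using obtain_pow_of_prime_exponent_in_generate[OF fin t p w(1) _ w(2) generate.incl[of t] tp] that
    by (metis singletonI)
qed

lemma commute_nat_pow:
  assumes x: "x \<in> carrier G" and y: "y \<in> carrier G" and xy: "x \<otimes> y = y \<otimes> x"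
  shows "x [^] (i::nat) \<otimes> y [^] (j::nat) = y [^] j \<otimes> x [^] i"
proof -
  have "x [^] i \<otimes> y = y \<otimes> x [^] i" using group_commutes_pow[OF xy x y] .
  from group_commutes_pow[OF this[symmetric] y] show ?thesis using x by simp
qed

lemma power_products_mult:
  assumes x: "x \<in> carrier G" and y: "y \<in> carrier G" and xy: "x \<otimes> y = y \<otimes> x"
  shows "(x [^] (i::nat) \<otimes> y [^] (j::nat)) \<otimes> (x [^] (i'::nat) \<otimes> y [^] (j'::nat))
           = x [^] (i + i') \<otimes> y [^] (j + j')"
proof -
  have "(x [^] i \<otimes> y [^] j) \<otimes> (x [^] i' \<otimes> y [^] j') = x [^] i \<otimes> (y [^] j \<otimes> x [^] i') \<otimes> y [^] j'"
    using x y by (simp add: m_assoc)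
  also have "\<dots> = x [^] i \<otimes> (x [^] i' \<otimes> y [^] j) \<otimes> y [^] j'"
    using commute_nat_pow[OF x y xy, of i' j] by simp
  also have "\<dots> = x [^] (i + i') \<otimes> y [^] (j + j')" using x y by (simp add: m_assoc nat_pow_mult[symmetric])
  finally show ?thesis .
qed

lemma power_products_comm:
  assumes x: "x \<in> carrier G" and y: "y \<in> carrier G" and xy: "x \<otimes> y = y \<otimes> x"
    and "u \<in> power_products G x y" "v \<in> power_products G x y"
  shows "u \<otimes> v = v \<otimes> u"
  using assms(4,5) power_products_mult[OF x y xy] unfolding power_products_def by (auto simp: add.commute)

context
  fixes x y :: 'a and p :: nat
  assumes x: "x \<in> carrier G" and y: "y \<in> carrier G" and xy: "x \<otimes> y = y \<otimes> x"
    and xp: "x [^] p = \<one>" and yp: "y [^] p = \<one>"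
begin

lemma power_products_pow_eq_one:
  assumes "w \<in> power_products G x y"
  shows "w [^] p = \<one>"
proof -
  obtain i j :: nat where w: "w = x [^] i \<otimes> y [^] j" using assms unfolding power_products_def by blast
  have "x [^] i \<otimes> y [^] j = y [^] j \<otimes> x [^] i" using commute_nat_pow[OF x y xy] .
  then have "w [^] p = (x [^] i) [^] p \<otimes> (y [^] j) [^] p" unfolding w using pow_mult_distrib x y by simp
  also have "\<dots> = (x [^] p) [^] i \<otimes> (y [^] p) [^] j" using x y by (simp add: nat_pow_pow mult.commute)
  finally show ?thesis using xp yp by simp
qed

lemma subgroup_power_products:
  assumes "p \<ge> 1"
  shows "subgroup (power_products G x y) G"
proof (rule subgroupI)
  show "power_products G x y \<subseteq> carrier G" unfolding power_products_def using x y by auto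
  have "\<one> = x [^] (0::nat) \<otimes> y [^] (0::nat)" by simp
  then show "power_products G x y \<noteq> {}" unfolding power_products_def by blast
next
  fix w assume "w \<in> power_products G x y"
  then obtain i j :: nat where w: "w = x [^] i \<otimes> y [^] j" unfolding power_products_def by blast
  have "(p - 1) * k + k = p * k" for k using assms by (cases p) auto
  then have "(x [^] ((p - 1) * i) \<otimes> y [^] ((p - 1) * j)) \<otimes> w = \<one>"
    unfolding w power_products_mult[OF x y xy] using x y xp yp by (simp add: nat_pow_pow[symmetric])
  then have "inv w = x [^] ((p - 1) * i) \<otimes> y [^] ((p - 1) * j)"
    using w x y by (intro inv_equality) auto
  then show "inv w \<in> power_products G x y" unfolding power_products_def by blast
next
  fix v w assume "v \<in> power_products G x y" "w \<in> power_products G x y"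
  then show "v \<otimes> w \<in> power_products G x y"
    unfolding power_products_def using power_products_mult[OF x y xy] by blast
qed

end


text \<open>If \<open>y\<^sup>m = 1\<close> for \<open>m = ord x\<close> but \<open>y \<notin> \<langle>x\<rangle>\<close>, then the group \<open>\<langle>x, y\<rangle>\<close> has exponent \<open>m\<close>
  but more than \<open>m\<close> elements, so it is not cyclic.\<close>

lemma power_products_not_cyclic:
  assumes fin: "finite (carrier G)" and x: "x \<in> carrier G" and y: "y \<in> carrier G"
    and xy: "x \<otimes> y = y \<otimes> x" and yp: "y [^] ord x = \<one>" and y_notin: "y \<notin> generate G {x}"
  shows "\<not> cyclic_group (subgroup_generated G (power_products G x y))"
proof
  define P where "P = power_products G x y"
  define m where "m = ord x"
  have m: "m \<ge> 1" unfolding m_def using ord_ge_1[OF fin x] .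
  have xp: "x [^] m = \<one>" unfolding m_def using x by simp
  have P: "subgroup P G" unfolding P_def using subgroup_power_products[OF x y xy xp yp[folded m_def] m] .
  assume "cyclic_group (subgroup_generated G P)"
  then obtain w where wP: "w \<in> P" and Pw: "P = generate G {w}" using cyclic_group_subgroup_generated_iff[OF P] by blast
  have wc: "w \<in> carrier G" using subgroup.mem_carrier[OF P wP] .
  have wm: "w [^] m = \<one>"
    using power_products_pow_eq_one[OF x y xy xp yp[folded m_def]] wP unfolding P_def by blast
  have "P \<subseteq> (\<lambda>k. w [^] k) ` {..<m}"
  proof
    fix v assume "v \<in> P"
    then obtain k :: nat where "v = w [^] k" using Pw mem_generate_singleton_iff[OF fin wc] by blast
    moreover have "w [^] k = w [^] (k mod m)"
      using nat_pow_eq_iff_cong[OF wc] wm pow_eq_id[OF wc] by (simp add: cong_def mod_mod_cancel)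
    ultimately show "v \<in> (\<lambda>k. w [^] k) ` {..<m}" using m by auto
  qed
  then have "card P \<le> m" using card_image_le[of "{..<m}"] card_mono[of _ P] by (metis card_lessThan finite_imageI finite_lessThan le_trans)
  moreover have "insert y ((\<lambda>i. x [^] i) ` {..<m}) \<subseteq> P"
  proof -
    have "x [^] i = x [^] i \<otimes> y [^] (0::nat)" "y = x [^] (0::nat) \<otimes> y [^] (1::nat)" for i :: nat
      using x y by simp_all
    then show ?thesis unfolding P_def power_products_def by blast
  qed
  moreover have "card (insert y ((\<lambda>i. x [^] i) ` {..<m})) = Suc m"
  proof -
    have "inj_on (\<lambda>i. x [^] i) {..<m}"
      using ord_inj[OF x] m by (simp add: m_def atLeast0AtMost lessThan_Suc_atMost[symmetric])
    moreover have "y \<notin> (\<lambda>i. x [^] i) ` {..<m}"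
      using y_notin mem_generate_singleton_iff[OF fin x] by blast
    ultimately show ?thesis by (simp add: card_image)
  qed
  moreover have "finite P" using fin subgroup.subset[OF P] finite_subset by blast
  ultimately show False by (metis card_mono not_less_eq_eq)
qed

end

locale cyclic_self_centralizing = group G for G (structure) +
  fixes C :: "'a set" and a :: 'a and n :: nat
  assumes finite_carrier: "finite (carrier G)"
    and C_normal: "C \<lhd> G"
    and a_carrier: "a \<in> carrier G"
    and C_generate: "C = generate G {a}"
    and card_C: "card C = n"
    and centralizer_C: "centralizer G C = C"
begin

definition acts_by_power :: "'a \<Rightarrow> nat \<Rightarrow> bool" where
  "acts_by_power x r \<longleftrightarrow> (\<forall>c\<in>C. x \<otimes> c \<otimes> inv x = c [^] r)"

lemma C_subgroup: "subgroup C G"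
  using C_normal normal_imp_subgroup by blast

lemma C_carrier: "c \<in> C \<Longrightarrow> c \<in> carrier G"
  by (rule subgroup.mem_carrier[OF C_subgroup])

lemma a_in_C: "a \<in> C"
  unfolding C_generate by (rule generate.incl) simp

lemma ord_a: "ord a = n"
  using generate_pow_card[OF a_carrier] C_generate card_C by simp

lemma n_pos: "n > 0"
  using ord_ge_1[OF finite_carrier a_carrier] ord_a by simp

lemma mem_C_iff: "c \<in> C \<longleftrightarrow> (\<exists>i::nat. c = a [^] i)"
  using mem_generate_singleton_iff[OF finite_carrier a_carrier] C_generate by simp

lemma C_pow_closed: "c \<in> C \<Longrightarrow> c [^] (i::nat) \<in> C"
  using subgroup_nat_pow_closed[OF C_subgroup] by blast

lemma C_comm:
  assumes "c \<in> C" "d \<in> C"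
  shows "c \<otimes> d = d \<otimes> c"
proof -
  obtain i j :: nat where "c = a [^] i" "d = a [^] j" using assms mem_C_iff by blast
  then show ?thesis using a_carrier by (simp add: nat_pow_mult add.commute)
qed

lemma conj_in_C: "x \<in> carrier G \<Longrightarrow> c \<in> C \<Longrightarrow> x \<otimes> c \<otimes> inv x \<in> C"
  using normal.inv_op_closed2[OF C_normal] by blast

lemma in_C_of_commutes:
  assumes "x \<in> carrier G" "\<And>c. c \<in> C \<Longrightarrow> x \<otimes> c = c \<otimes> x"
  shows "x \<in> C"
  using assms centralizer_C unfolding centralizer_def by auto

lemma a_pow_eq_iff: "a [^] (i::nat) = a [^] j \<longleftrightarrow> [i = j] (mod n)"
  using nat_pow_eq_iff_cong[OF a_carrier] ord_a by simp

lemma C_pow_cong: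
  assumes "c \<in> C" "[r = r'] (mod n)"
  shows "c [^] (r::nat) = c [^] r'"
proof -
  obtain i :: nat where i: "c = a [^] i" using assms(1) mem_C_iff by blast
  have "a [^] (i * r) = a [^] (i * r')" using assms(2) by (simp add: a_pow_eq_iff cong_scalar_left)
  then show ?thesis using i a_carrier by (simp add: nat_pow_pow)
qed

lemma exists_acts_by_power:
  assumes "x \<in> carrier G"
  obtains r where "acts_by_power x r" "r \<ge> 1"
proof -
  obtain r0 :: nat where r0: "x \<otimes> a \<otimes> inv x = a [^] r0"
    using conj_in_C[OF assms a_in_C] mem_C_iff by blast
  have ar: "x \<otimes> a \<otimes> inv x = a [^] (r0 + n)"
    using r0 a_pow_eq_iff by (simp add: cong_def)
  have "acts_by_power x (r0 + n)" unfolding acts_by_power_def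
  proof
    fix c assume "c \<in> C"
    then obtain i :: nat where i: "c = a [^] i" using mem_C_iff by blast
    have "x \<otimes> c \<otimes> inv x = (a [^] (r0 + n)) [^] i"
      unfolding i ar[symmetric] using conj_nat_pow[OF assms a_carrier] .
    then show "x \<otimes> c \<otimes> inv x = c [^] (r0 + n)"
      unfolding i using a_carrier by (simp add: nat_pow_pow mult.commute)
  qed
  then show thesis using that n_pos by simp
qed

lemma acts_by_power_conj:
  assumes "acts_by_power x r" "x \<in> carrier G" "h \<in> carrier G"
  shows "acts_by_power (h \<otimes> x \<otimes> inv h) r"
  unfolding acts_by_power_def
proof
  fix c assume c: "c \<in> C"
  have cc: "c \<in> carrier G" using C_carrier c .
  have d: "inv h \<otimes> c \<otimes> h \<in> C" using conj_in_C[of "inv h" c] c assms(3) by simp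
  have "h \<otimes> x \<otimes> inv h \<otimes> c \<otimes> inv (h \<otimes> x \<otimes> inv h) = h \<otimes> (x \<otimes> (inv h \<otimes> c \<otimes> h) \<otimes> inv x) \<otimes> inv h"
    using assms cc by (simp add: m_assoc inv_mult_group)
  also have "\<dots> = h \<otimes> (inv h \<otimes> c \<otimes> h) [^] r \<otimes> inv h"
    using assms(1) d unfolding acts_by_power_def by simp
  also have "\<dots> = (h \<otimes> (inv h \<otimes> c \<otimes> h) \<otimes> inv h) [^] r"
    using conj_nat_pow assms(3) d C_carrier by blast
  also have "h \<otimes> (inv h \<otimes> c \<otimes> h) \<otimes> inv h = c" using assms(3) cc by (simp add: m_assoc)
  finally show "h \<otimes> x \<otimes> inv h \<otimes> c \<otimes> inv (h \<otimes> x \<otimes> inv h) = c [^] r" .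
qed

text \<open>Since \<open>C\<close> is self-centralizing, two elements inducing the same automorphism of \<open>C\<close>
  differ by an element of \<open>C\<close>.\<close>

lemma mult_inv_in_C_of_acts_by_power:
  assumes "acts_by_power x r" "acts_by_power y r" "x \<in> carrier G" "y \<in> carrier G"
  shows "x \<otimes> inv y \<in> C"
proof (rule in_C_of_commutes)
  show "x \<otimes> inv y \<in> carrier G" using assms by simp
  fix c assume c: "c \<in> C"
  have cc: "c \<in> carrier G" using C_carrier c .
  define d where "d = inv y \<otimes> c \<otimes> y"
  have dC: "d \<in> C" unfolding d_def using conj_in_C[of "inv y" c] c assms(4) by simp
  have "y \<otimes> d \<otimes> inv y = c" unfolding d_def using assms(4) cc by (simp add: m_assoc)
  then have "d [^] r = c" using assms(2) dC unfolding acts_by_power_def by simp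
  then have "x \<otimes> d \<otimes> inv x = c" using assms(1) dC unfolding acts_by_power_def by simp
  then have "x \<otimes> inv y \<otimes> c \<otimes> y \<otimes> inv x \<otimes> x \<otimes> inv y = c \<otimes> x \<otimes> inv y"
    unfolding d_def using assms cc by (simp add: m_assoc)
  then show "x \<otimes> inv y \<otimes> c = c \<otimes> (x \<otimes> inv y)" using assms cc by (simp add: m_assoc)
qed

lemma acts_by_power_pow:
  assumes "acts_by_power x r" "x \<in> carrier G"
  shows "acts_by_power (x [^] (i::nat)) (r ^ i)"
proof (induction i)
  case 0
  then show ?case unfolding acts_by_power_def using C_carrier by simp
next
  case (Suc i)
  show ?case unfolding acts_by_power_def
  proof
    fix c assume c: "c \<in> C"
    have cc: "c \<in> carrier G" using C_carrier c .
    have "x [^] Suc i \<otimes> c \<otimes> inv (x [^] Suc i) = x [^] i \<otimes> (x \<otimes> c \<otimes> inv x) \<otimes> inv (x [^] i)"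
      using assms(2) cc by (simp add: m_assoc inv_mult_group)
    also have "\<dots> = x [^] i \<otimes> c [^] r \<otimes> inv (x [^] i)"
      using assms(1) c unfolding acts_by_power_def by simp
    also have "\<dots> = (c [^] r) [^] (r ^ i)"
      using Suc C_pow_closed[OF c] unfolding acts_by_power_def by simp
    also have "\<dots> = c [^] (r ^ Suc i)" using cc by (simp add: nat_pow_pow)
    finally show "x [^] Suc i \<otimes> c \<otimes> inv (x [^] Suc i) = c [^] (r ^ Suc i)" .
  qed
qed

lemma acts_by_power_mult_C:
  assumes "acts_by_power x r" "x \<in> carrier G" "c \<in> C"
  shows "acts_by_power (c \<otimes> x) r"
  unfolding acts_by_power_def
proof
  fix d assume d: "d \<in> C"
  have cc: "c \<in> carrier G" "d \<in> carrier G" using C_carrier assms(3) d by auto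
  have "c \<otimes> x \<otimes> d \<otimes> inv (c \<otimes> x) = c \<otimes> (x \<otimes> d \<otimes> inv x) \<otimes> inv c"
    using assms(2) cc by (simp add: m_assoc inv_mult_group)
  also have "\<dots> = c \<otimes> d [^] r \<otimes> inv c" using assms(1) d unfolding acts_by_power_def by simp
  also have "\<dots> = d [^] r" using C_comm[OF assms(3) C_pow_closed[OF d]] cc by (simp add: m_assoc)
  finally show "c \<otimes> x \<otimes> d \<otimes> inv (c \<otimes> x) = d [^] r" .
qed

lemma mult_C_pow:
  assumes "acts_by_power x r" "x \<in> carrier G" "c \<in> C"
  shows "(c \<otimes> x) [^] (i::nat) = c [^] (\<Sum>j<i. r^j) \<otimes> x [^] i"
proof (induction i)
  case 0
  then show ?case using assms C_carrier by simp
next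
  case (Suc i)
  have cc: "c \<in> carrier G" using C_carrier assms(3) .
  define s where "s = (\<Sum>j<i. r^j)"
  have cs: "c [^] s \<in> C" using C_pow_closed[OF assms(3)] .
  have "(c \<otimes> x) [^] Suc i = (c \<otimes> x) \<otimes> (c \<otimes> x) [^] i"
    using nat_pow_Suc2[of "c \<otimes> x" i] assms cc by simp
  also have "\<dots> = c \<otimes> (x \<otimes> c [^] s \<otimes> inv x) \<otimes> (x \<otimes> x [^] i)"
    using Suc assms(2) cc unfolding s_def by (simp add: m_assoc)
  also have "x \<otimes> x [^] i = x [^] Suc i" using nat_pow_Suc2[OF assms(2), of i] by simp
  also have "x \<otimes> c [^] s \<otimes> inv x = (c [^] s) [^] r"
    using assms(1) cs unfolding acts_by_power_def by simp
  also have "c \<otimes> (c [^] s) [^] r = c [^] (\<Sum>j<Suc i. r^j)"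
  proof -
    have "(\<Sum>j<Suc i. r^j) = 1 + r * s" unfolding s_def
      by (simp only: sum.lessThan_Suc_shift) (simp add: sum_distrib_left)
    then show ?thesis using cc by (simp add: nat_pow_pow nat_pow_Suc2[symmetric] mult.commute)
  qed
  finally show ?case .
qed

lemma conj_eq_C_mult:
  assumes "x \<in> carrier G" "h \<in> carrier G"
  obtains c where "c \<in> C" "h \<otimes> x \<otimes> inv h = c \<otimes> x"
proof -
  obtain r where r: "acts_by_power x r" using exists_acts_by_power[OF assms(1)] by blast
  have "h \<otimes> x \<otimes> inv h \<otimes> inv x \<in> C"
    using mult_inv_in_C_of_acts_by_power[OF acts_by_power_conj[OF r assms] r] assms by simp
  moreover have "h \<otimes> x \<otimes> inv h = (h \<otimes> x \<otimes> inv h \<otimes> inv x) \<otimes> x" using assms by (simp add: m_assoc)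
  ultimately show thesis using that by blast
qed

lemma commutator_in_C:
  assumes "c \<in> C" "t \<in> carrier G"
  shows "c \<otimes> t \<otimes> inv c \<otimes> inv t \<in> C"
proof -
  have "c \<otimes> (t \<otimes> inv c \<otimes> inv t) \<in> C"
    using conj_in_C[OF assms(2)] subgroup.m_inv_closed[OF C_subgroup] C_subgroup assms(1)
    by (simp add: subgroup.m_closed)
  then show ?thesis using assms C_carrier by (simp add: m_assoc)
qed

text \<open>Every subgroup of the cyclic normal subgroup \<open>C\<close> is normal in \<open>G\<close>, so a subgroup with
  trivial core meets \<open>C\<close> trivially.\<close>

lemma eq_one_of_core_trivial:
  assumes T: "subgroup T G" and core: "core G (carrier G) T = {\<one>}" and "t \<in> T" "t \<in> C"
  shows "t = \<one>"
proof -
  have "t \<in> h <# T #> inv h" if h: "h \<in> carrier G" for h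
  proof -
    obtain r where "acts_by_power (inv h) r" using exists_acts_by_power[of "inv h"] h by auto
    then have "inv h \<otimes> t \<otimes> h = t [^] r" using \<open>t \<in> C\<close> h unfolding acts_by_power_def by simp
    then have "inv h \<otimes> t \<otimes> h \<in> T" using subgroup_nat_pow_closed[OF T \<open>t \<in> T\<close>] by simp
    moreover have "t = h \<otimes> (inv h \<otimes> t \<otimes> h) \<otimes> inv h" using h C_carrier[OF \<open>t \<in> C\<close>] by (simp add: m_assoc)
    ultimately show ?thesis unfolding mem_conjugate_iff by blast
  qed
  then have "t \<in> core G (carrier G) T" unfolding mem_core_iff by blast
  then show ?thesis using core by simp
qed

lemma a_notin_normalizer:
  assumes T: "subgroup T G" and core: "core G (carrier G) T = {\<one>}" and "T \<noteq> {\<one>}"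
  shows "a \<notin> normalizer G T"
proof
  assume aN: "a \<in> normalizer G T"
  have T_carrier: "T \<subseteq> carrier G" using T subgroup.subset by blast
  have "t = \<one>" if t: "t \<in> T" for t
  proof -
    have tc: "t \<in> carrier G" using T_carrier t by blast
    have "a \<otimes> t \<otimes> inv a \<otimes> inv t \<in> T"
      using conj_mem_of_mem_normalizer[OF T_carrier aN t] T t
      by (simp add: subgroup.m_closed subgroup.m_inv_closed)
    then have at: "a \<otimes> t = t \<otimes> a"
      using eq_one_of_core_trivial[OF T core] commutator_in_C[OF a_in_C tc]
        commutator_eq_one_iff[OF a_carrier tc] by blast
    have "t \<in> C"
    proof (rule in_C_of_commutes[OF tc])
      fix c assume "c \<in> C"
      then obtain i :: nat where "c = a [^] i" using mem_C_iff by blast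
      then show "t \<otimes> c = c \<otimes> t" using group_commutes_pow[OF at a_carrier tc, of i] by simp
    qed
    then show ?thesis using eq_one_of_core_trivial[OF T core t] by blast
  qed
  then show False using \<open>T \<noteq> {\<one>}\<close> subgroup.one_closed[OF T] by blast
qed

lemma obtain_conjugate_in_normalizer:
  assumes exp: "expansive G T" and aN: "a \<notin> normalizer G T"
  obtains s where "s \<in> T" "a \<otimes> s \<otimes> inv a \<in> normalizer G T" "a \<otimes> s \<otimes> inv a \<notin> T"
proof -
  define N where "N = normalizer G T"
  define Y where "Y = ((a <# T #> inv a) \<inter> N) <#> T"
  have T: "subgroup T G" using exp unfolding expansive_def by blast
  have "T \<subset> core G N Y" using exp aN a_carrier unfolding expansive_def N_def Y_def by blast
  then obtain k where "k \<in> core G N Y" and kT: "k \<notin> T" by blast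
  moreover have "\<one> \<in> N"
    unfolding N_def using normalizer_imp_subgroup[OF subgroup.subset[OF T]] subgroup.one_closed by blast
  ultimately have "k \<in> \<one> <# Y #> inv \<one>" unfolding mem_core_iff by blast
  then obtain y where "y \<in> Y" and ky: "k = \<one> \<otimes> y \<otimes> inv \<one>" unfolding mem_conjugate_iff by blast
  then obtain x t where x: "x \<in> a <# T #> inv a" "x \<in> N" and t: "t \<in> T" and y: "y = x \<otimes> t"
    unfolding Y_def mem_set_mult_iff by blast
  obtain s where s: "s \<in> T" "x = a \<otimes> s \<otimes> inv a" using x(1) unfolding mem_conjugate_iff by blast
  have "x \<in> carrier G" "t \<in> carrier G" using s a_carrier t subgroup.mem_carrier[OF T] by auto
  then have "k = x \<otimes> t" using ky y by simp
  then have "x \<notin> T" using kT t subgroup.m_closed[OF T] by blast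
  then show thesis using that s x(2) unfolding N_def by blast
qed

lemma a_mult_inv_pow_eq_one_iff:
  assumes "e \<ge> 1"
  shows "a \<otimes> inv (a [^] e) = \<one> \<longleftrightarrow> n dvd e - 1"
proof -
  have c: "a \<otimes> inv (a [^] e) = a [^] (1 - int e)" using a_carrier by (simp add: int_pow_diff int_pow_int)
  have "a [^] (1 - int e) = a [^] (0::int) \<longleftrightarrow> int n dvd 0 - (1 - int e)"
    using int_pow_eq[OF a_carrier, of "1 - int e" 0] unfolding ord_a .
  moreover have "int (e - 1) = 0 - (1 - int e)" using assms by simp
  then have "int n dvd 0 - (1 - int e) \<longleftrightarrow> n dvd e - 1" by (metis int_dvd_int_iff)
  ultimately show ?thesis unfolding c by (simp only: int_pow_0)
qed

lemma a_mult_inv_pow_fixed_iff: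
  assumes "e \<ge> 1"
  shows "(a \<otimes> inv (a [^] e)) [^] e = a \<otimes> inv (a [^] e) \<longleftrightarrow> n dvd (e - 1)^2"
proof -
  have c: "a \<otimes> inv (a [^] e) = a [^] (1 - int e)" using a_carrier by (simp add: int_pow_diff int_pow_int)
  have "(a [^] (1 - int e)) [^] e = (a [^] (1 - int e)) [^] (int e)" by (simp add: int_pow_int)
  also have "\<dots> = a [^] ((1 - int e) * int e)" by (rule int_pow_pow[OF a_carrier])
  finally have "(a \<otimes> inv (a [^] e)) [^] e = a \<otimes> inv (a [^] e)
      \<longleftrightarrow> int n dvd (1 - int e) - (1 - int e) * int e"
    unfolding c using int_pow_eq[OF a_carrier] ord_a by simp
  moreover have "(1 - int e) - (1 - int e) * int e = int ((e - 1)^2)"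
  proof -
    have "int (e - 1) = int e - 1" using assms by simp
    then have "int ((e - 1)^2) = (int e - 1)^2" by (simp only: of_nat_power)
    then show ?thesis by (simp add: power2_eq_square algebra_simps)
  qed
  ultimately show ?thesis by (simp only: int_dvd_int_iff)
qed

text \<open>If \<open>s\<close> acts on \<open>C\<close> as \<open>c \<mapsto> c^e\<close>, then \<open>a s a\<inverse> = c s\<close> with \<open>c = a^(1-e) \<in> C\<close>;
  normalizing \<open>T \<ni> s\<close> forces \<open>c^(1-e) \<in> T \<inter> C = 1\<close>, i.e. \<open>(1-e)^2 \<equiv> 0 (mod n)\<close>, while
  \<open>c \<noteq> 1\<close> because \<open>a s a\<inverse> \<notin> T\<close>.\<close>

lemma dvd_square_of_conjugate_in_normalizer:
  assumes T: "subgroup T G" and core: "core G (carrier G) T = {\<one>}"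
    and s: "s \<in> T" and sN: "a \<otimes> s \<otimes> inv a \<in> normalizer G T" and sT: "a \<otimes> s \<otimes> inv a \<notin> T"
    and e: "acts_by_power s e" and e1: "e \<ge> 1"
  shows "n dvd (e - 1)^2" and "\<not> n dvd e - 1"
proof -
  have T_carrier: "T \<subseteq> carrier G" using T subgroup.subset by blast
  have sc: "s \<in> carrier G" using s T_carrier by blast
  define c where "c = a \<otimes> inv (a [^] e)"
  have cC: "c \<in> C" unfolding c_def
    using a_in_C C_subgroup C_pow_closed[OF a_in_C, of e] by (simp add: subgroup.m_closed subgroup.m_inv_closed)
  have cc: "c \<in> carrier G" using C_carrier cC .
  have inv_conj: "s \<otimes> inv d \<otimes> inv s = inv (d [^] e)" if "d \<in> C" for d
  proof -
    have "s \<otimes> inv d \<otimes> inv s = (inv d) [^] e"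
      using e subgroup.m_inv_closed[OF C_subgroup that] unfolding acts_by_power_def by simp
    then show ?thesis using C_carrier[OF that] by (simp add: nat_pow_inv)
  qed
  have x: "a \<otimes> s \<otimes> inv a = c \<otimes> s"
  proof -
    have "c \<otimes> s = a \<otimes> (s \<otimes> inv a \<otimes> inv s) \<otimes> s" unfolding c_def inv_conj[OF a_in_C] ..
    also have "\<dots> = a \<otimes> s \<otimes> inv a" using a_carrier sc by (simp add: m_assoc)
    finally show ?thesis by simp
  qed
  have "c \<otimes> s \<otimes> s \<otimes> inv (c \<otimes> s) \<in> T"
    using conj_mem_of_mem_normalizer[OF T_carrier sN s] unfolding x .
  then have "c \<otimes> s \<otimes> s \<otimes> inv (c \<otimes> s) \<otimes> inv s \<in> T"
    using T s by (simp add: subgroup.m_closed subgroup.m_inv_closed)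
  moreover have "c \<otimes> s \<otimes> s \<otimes> inv (c \<otimes> s) \<otimes> inv s = c \<otimes> (s \<otimes> inv c \<otimes> inv s)"
    using cc sc by (simp add: m_assoc inv_mult_group)
  ultimately have "c \<otimes> inv (c [^] e) \<in> T" using inv_conj[OF cC] by simp
  moreover have "c \<otimes> inv (c [^] e) \<in> C"
    using cC C_subgroup C_pow_closed[OF cC, of e] by (simp add: subgroup.m_closed subgroup.m_inv_closed)
  ultimately have "c \<otimes> inv (c [^] e) = \<one>" using eq_one_of_core_trivial[OF T core] by blast
  then have "inv (inv (c [^] e)) = c" using cc by (intro inv_equality) simp_all
  then have "c [^] e = c" using cc by simp
  with a_mult_inv_pow_fixed_iff[OF e1, folded c_def] show "n dvd (e - 1)^2" ..
  have "c \<noteq> \<one>" using sT x s sc by auto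
  with a_mult_inv_pow_eq_one_iff[OF e1, folded c_def] show "\<not> n dvd e - 1" by simp
qed

theorem no_expansive_subgroup:
  assumes two: "multiplicity (2::nat) n \<noteq> 2"
    and no_alpha: "\<And>p. Factorial_Ring.prime p \<Longrightarrow> p^2 dvd n \<Longrightarrow>
         \<not> (\<exists>g\<in>carrier G. \<forall>x\<in>sylow_part G C p. g \<otimes> x \<otimes> inv g = x [^] (1 + p ^ (multiplicity p n - 1)))"
  shows "\<not> (\<exists>T. expansive G T \<and> T \<noteq> {\<one>} \<and> core G (carrier G) T = {\<one>})"
proof
  assume "\<exists>T. expansive G T \<and> T \<noteq> {\<one>} \<and> core G (carrier G) T = {\<one>}"
  then obtain T where exp: "expansive G T" and "T \<noteq> {\<one>}" and core: "core G (carrier G) T = {\<one>}"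
    by blast
  have T: "subgroup T G" using exp unfolding expansive_def by blast
  obtain s where s: "s \<in> T" "a \<otimes> s \<otimes> inv a \<in> normalizer G T" "a \<otimes> s \<otimes> inv a \<notin> T"
    using obtain_conjugate_in_normalizer[OF exp a_notin_normalizer[OF T core \<open>T \<noteq> {\<one>}\<close>]] .
  have sc: "s \<in> carrier G" using s(1) subgroup.mem_carrier[OF T] by blast
  obtain e where e: "acts_by_power s e" "e \<ge> 1" using exists_acts_by_power[OF sc] .
  obtain p M where p: "Factorial_Ring.prime p" "p^2 dvd n"
    and M: "[e^M = 1 + p^(multiplicity p n - 1)] (mod p^multiplicity p n)"
    by (rule power_cong_one_plus_prime_power_of_dvd_square[OF
          dvd_square_of_conjugate_in_normalizer[OF T core s e] two])
  have "s [^] M \<otimes> x \<otimes> inv (s [^] M) = x [^] (1 + p ^ (multiplicity p n - 1))"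
    if x: "x \<in> sylow_part G C p" for x
  proof -
    have xC: "x \<in> C" and "x [^] (p ^ multiplicity p n) = \<one>"
      using x unfolding sylow_part_def card_C by auto
    then have "ord x dvd p ^ multiplicity p n" using C_carrier by (simp add: pow_eq_id)
    then have "[e^M = 1 + p^(multiplicity p n - 1)] (mod ord x)" using M cong_dvd_modulus_nat by blast
    then have "x [^] (e^M) = x [^] (1 + p^(multiplicity p n - 1))"
      using nat_pow_eq_iff_cong[OF C_carrier[OF xC]] by blast
    then show ?thesis using acts_by_power_pow[OF e(1) sc, of M] xC unfolding acts_by_power_def by simp
  qed
  then show False using no_alpha[OF p] sc by blast
qed

lemma power_products_subset_set_mult:
  assumes t: "t \<in> carrier G" and c: "c \<in> C" and ct: "c \<otimes> t = t \<otimes> c"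
    and g: "g \<in> carrier G" and gt: "g \<otimes> t \<otimes> inv g = c \<otimes> t"
  shows "power_products G c t
           \<subseteq> ((g <# generate G {t} #> inv g) \<inter> normalizer G (generate G {t})) <#> generate G {t}"
proof
  define T where "T = generate G {t}"
  have cc: "c \<in> carrier G" using C_carrier c .
  have T_pow: "w \<in> T \<longleftrightarrow> (\<exists>k::nat. w = t [^] k)" for w
    unfolding T_def using mem_generate_singleton_iff[OF finite_carrier t] .
  have T_carrier: "T \<subseteq> carrier G" unfolding T_def using generate_incl t by blast
  have N: "subgroup (normalizer G T) G" using normalizer_imp_subgroup[OF T_carrier] .
  have cN: "c \<in> normalizer G T" and tN: "t \<in> normalizer G T"
    unfolding T_def using commuting_in_normalizer_generate[OF t] cc ct t by auto
  fix w assume "w \<in> power_products G c t"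
  then obtain i j :: nat where w: "w = c [^] i \<otimes> t [^] j" unfolding power_products_def by blast
  have "g \<otimes> t [^] i \<otimes> inv g = c [^] i \<otimes> t [^] i"
    using conj_nat_pow[OF g t, of i] pow_mult_distrib[OF ct cc t, of i] gt by simp
  moreover have "g \<otimes> t [^] i \<otimes> inv g \<in> g <# T #> inv g"
    unfolding mem_conjugate_iff using T_pow by blast
  moreover have "c [^] i \<otimes> t [^] i \<in> normalizer G T"
    using subgroup_nat_pow_closed[OF N] subgroup.m_closed[OF N] cN tN by blast
  moreover have "w = (c [^] i \<otimes> t [^] i) \<otimes> t [^] ((ord t - 1) * i + j)"
  proof -
    have "ord t \<ge> 1" using ord_ge_1[OF finite_carrier t] .
    then have exp: "i + ((ord t - 1) * i + j) = ord t * i + j" by (cases "ord t") simp_all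
    have "t [^] i \<otimes> t [^] ((ord t - 1) * i + j) = t [^] (i + ((ord t - 1) * i + j))"
      by (rule nat_pow_mult[OF t])
    also have "\<dots> = t [^] (ord t * i) \<otimes> t [^] j" unfolding exp by (rule nat_pow_mult[OF t, symmetric])
    also have "\<dots> = t [^] j" using t by (simp add: nat_pow_pow[symmetric])
    finally show ?thesis using w cc t by (simp add: m_assoc)
  qed
  moreover have "t [^] ((ord t - 1) * i + j) \<in> T" using T_pow by blast
  ultimately show "w \<in> ((g <# T #> inv g) \<inter> normalizer G T) <#> T"
    unfolding mem_set_mult_iff by (metis IntI)
qed

lemma conj_power_products_of_normalizer:
  assumes t: "t \<in> carrier G" and c: "c \<in> C"
    and h: "h \<in> normalizer G (generate G {t})" and w: "w \<in> power_products G c t"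
  shows "inv h \<otimes> w \<otimes> h \<in> power_products G c t"
proof -
  have cc: "c \<in> carrier G" using C_carrier c .
  have T_carrier: "generate G {t} \<subseteq> carrier G" using generate_incl t by blast
  have hc: "h \<in> carrier G" using h mem_normalizer_iff[OF T_carrier] by blast
  obtain i j :: nat where w: "w = c [^] i \<otimes> t [^] j" using w unfolding power_products_def by blast
  have "inv h \<in> normalizer G (generate G {t})"
    using subgroup.m_inv_closed[OF normalizer_imp_subgroup[OF T_carrier] h] .
  moreover have "t \<in> generate G {t}" by (rule generate.incl) simp
  ultimately have "inv h \<otimes> t \<otimes> inv (inv h) \<in> generate G {t}"
    by (rule conj_mem_of_mem_normalizer[OF T_carrier])
  then obtain l :: nat where l: "inv h \<otimes> t \<otimes> h = t [^] l"
    using hc mem_generate_singleton_iff[OF finite_carrier t] by auto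
  obtain r where "acts_by_power (inv h) r" using exists_acts_by_power[of "inv h"] hc by auto
  then have r: "inv h \<otimes> c \<otimes> h = c [^] r" using c hc unfolding acts_by_power_def by simp
  have "inv h \<otimes> w \<otimes> h = (inv h \<otimes> c [^] i \<otimes> h) \<otimes> (inv h \<otimes> t [^] j \<otimes> h)"
    unfolding w using hc cc t by (simp add: m_assoc)
  also have "\<dots> = (inv h \<otimes> c \<otimes> h) [^] i \<otimes> (inv h \<otimes> t \<otimes> h) [^] j"
    using conj_nat_pow[of "inv h" c i] conj_nat_pow[of "inv h" t j] hc cc t by simp
  also have "\<dots> = c [^] (r * i) \<otimes> t [^] (l * j)" unfolding r l using cc t by (simp add: nat_pow_pow)
  finally show ?thesis unfolding power_products_def by blast
qed

lemma power_products_subset_core: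
  assumes t: "t \<in> carrier G" and c: "c \<in> C" and ct: "c \<otimes> t = t \<otimes> c"
    and g: "g \<in> carrier G" and gt: "g \<otimes> t \<otimes> inv g = c \<otimes> t"
  shows "power_products G c t \<subseteq> core G (normalizer G (generate G {t}))
           (((g <# generate G {t} #> inv g) \<inter> normalizer G (generate G {t})) <#> generate G {t})"
proof
  fix w assume w: "w \<in> power_products G c t"
  have wc: "w \<in> carrier G"
    using w C_carrier[OF c] t unfolding power_products_def by auto
  show "w \<in> core G (normalizer G (generate G {t}))
           (((g <# generate G {t} #> inv g) \<inter> normalizer G (generate G {t})) <#> generate G {t})"
    unfolding mem_core_iff mem_conjugate_iff
  proof
    fix h assume h: "h \<in> normalizer G (generate G {t})"
    then have hc: "h \<in> carrier G" using mem_normalizer_iff[OF generate_incl] t by blast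
    have "w = h \<otimes> (inv h \<otimes> w \<otimes> h) \<otimes> inv h" using hc wc by (simp add: m_assoc)
    moreover have "inv h \<otimes> w \<otimes> h
        \<in> ((g <# generate G {t} #> inv g) \<inter> normalizer G (generate G {t})) <#> generate G {t}"
      using power_products_subset_set_mult[OF t c ct g gt] conj_power_products_of_normalizer[OF t c h w] ..
    ultimately show "\<exists>y\<in>((g <# generate G {t} #> inv g) \<inter> normalizer G (generate G {t})) <#> generate G {t}.
        w = h \<otimes> y \<otimes> inv h"
      by (rule bexI[of _ "inv h \<otimes> w \<otimes> h"])
  qed
qed

context
  fixes t :: 'a and p :: nat
  assumes t: "t \<in> carrier G" and p: "Factorial_Ring.prime p" and tp: "t [^] p = \<one>" and tC: "t \<notin> C"
begin

lemma eq_one_of_generate_inter_C: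
  assumes "w \<in> generate G {t}" "w \<in> C"
  shows "w = \<one>"
proof (rule ccontr)
  assume "w \<noteq> \<one>"
  then obtain j :: nat where "w [^] j = t"
    using generator_pow_of_prime_exponent[OF finite_carrier t p tp assms(1)] by blast
  then show False using C_pow_closed[OF assms(2), of j] tC by simp
qed

lemma core_generate_prime_exponent: "core G (carrier G) (generate G {t}) = {\<one>}"
proof
  define T where "T = generate G {t}"
  have T: "subgroup T G" unfolding T_def using generate_is_subgroup t by simp
  have tT: "t \<in> T" unfolding T_def by (rule generate.incl) simp
  show "core G (carrier G) T \<subseteq> {\<one>}"
  proof
    fix y assume y: "y \<in> core G (carrier G) T"
    then have "y \<in> \<one> <# T #> inv \<one>" unfolding mem_core_iff by blast
    then have yT: "y \<in> T" using subgroup.mem_carrier[OF T] unfolding mem_conjugate_iff by auto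
    have yc: "y \<in> carrier G" using subgroup.mem_carrier[OF T yT] .
    show "y \<in> {\<one>}"
    proof (rule ccontr)
      assume "y \<notin> {\<one>}"
      then have "y \<noteq> \<one>" by simp
      then obtain j :: nat where j: "y [^] j = t"
        using generator_pow_of_prime_exponent[OF finite_carrier t p tp yT[unfolded T_def]] by blast
      have "t \<in> C"
      proof (rule in_C_of_commutes[OF t])
        fix c assume cC: "c \<in> C"
        have cc: "c \<in> carrier G" using C_carrier cC .
        have "inv c \<in> carrier G" using cc by simp
        then have "y \<in> inv c <# T #> inv (inv c)" using y unfolding mem_core_iff by blast
        then obtain w where wT: "w \<in> T" and yw: "y = inv c \<otimes> w \<otimes> inv (inv c)"
          unfolding mem_conjugate_iff by blast
        have "c \<otimes> y \<otimes> inv c = w" using yw cc subgroup.mem_carrier[OF T wT] by (simp add: m_assoc)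
        then have "c \<otimes> t \<otimes> inv c = w [^] j" using conj_nat_pow[OF cc yc, of j] j by simp
        then have "c \<otimes> t \<otimes> inv c \<otimes> inv t \<in> T"
          using subgroup_nat_pow_closed[OF T wT] T tT by (simp add: subgroup.m_closed subgroup.m_inv_closed)
        then have "c \<otimes> t \<otimes> inv c \<otimes> inv t = \<one>"
          using eq_one_of_generate_inter_C commutator_in_C[OF cC t] unfolding T_def by blast
        then show "t \<otimes> c = c \<otimes> t" using commutator_eq_one_iff[OF cc t] by simp
      qed
      with tC show False by simp
    qed
  qed
  show "{\<one>} \<subseteq> core G (carrier G) T"
    using subgroup.one_closed[OF T] by (auto simp: mem_core_iff mem_conjugate_iff intro!: bexI[of _ \<one>])
qed

lemma expansive_generate_prime_exponent:
  assumes A: "A \<lhd> G" and ab: "\<And>x y. x \<in> A \<Longrightarrow> y \<in> A \<Longrightarrow> x \<otimes> y = y \<otimes> x" and tA: "t \<in> A"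
  shows "expansive G (generate G {t})"
  unfolding expansive_def
proof (intro conjI ballI)
  define T where "T = generate G {t}"
  show "subgroup (generate G {t}) G" using generate_is_subgroup t by simp
  fix g assume g: "g \<in> carrier G - normalizer G (generate G {t})"
  then have gc: "g \<in> carrier G" by simp
  obtain c where cC: "c \<in> C" and gt: "g \<otimes> t \<otimes> inv g = c \<otimes> t" using conj_eq_C_mult[OF t gc] .
  have cc: "c \<in> carrier G" using C_carrier cC .
  have "c = g \<otimes> t \<otimes> inv g \<otimes> inv t" using gt cc t by (simp add: m_assoc)
  then have "c \<in> A"
    using normal.inv_op_closed2[OF A gc tA] tA normal_imp_subgroup[OF A]
    by (simp add: subgroup.m_closed subgroup.m_inv_closed)
  then have ct: "c \<otimes> t = t \<otimes> c" using ab tA by blast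
  have "c \<noteq> \<one>"
  proof
    assume "c = \<one>"
    then have "g \<otimes> t \<otimes> inv g \<otimes> inv t = \<one>" using gt gc t by simp
    then have "g \<in> normalizer G (generate G {t})"
      using commuting_in_normalizer_generate[OF t gc] commutator_eq_one_iff[OF gc t] by simp
    with g show False by simp
  qed
  then have "c \<notin> T" using eq_one_of_generate_inter_C cC unfolding T_def by blast
  moreover have "T \<subseteq> power_products G c t"
  proof
    fix w assume "w \<in> T"
    then obtain k :: nat where "w = t [^] k"
      unfolding T_def mem_generate_singleton_iff[OF finite_carrier t] by blast
    then have "w = c [^] (0::nat) \<otimes> t [^] k" using t by simp
    then show "w \<in> power_products G c t" unfolding power_products_def by blast
  qed
  moreover have "c = c [^] (1::nat) \<otimes> t [^] (0::nat)" using cc by simp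
  then have "c \<in> power_products G c t" unfolding power_products_def by blast
  ultimately show "generate G {t} \<subset> core G (normalizer G (generate G {t}))
      (((g <# generate G {t} #> inv g) \<inter> normalizer G (generate G {t})) <#> generate G {t})"
    using power_products_subset_core[OF t cC ct gc gt] unfolding T_def by blast
qed

end

lemma obtain_prime_exponent_outside_C:
  assumes "\<not> roquette G"
  obtains A t and p :: nat where "A \<lhd> G" "\<forall>x\<in>A. \<forall>y\<in>A. x \<otimes> y = y \<otimes> x" "t \<in> A"
    "Factorial_Ring.prime p" "t [^] p = \<one>" "t \<notin> C"
proof -
  obtain A where A: "A \<lhd> G" and ab: "\<forall>x\<in>A. \<forall>y\<in>A. x \<otimes> y = y \<otimes> x"
    and not_cyclic: "\<not> cyclic_group (subgroup_generated G A)"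
    using assms unfolding roquette_def by blast
  have A_subgroup: "subgroup A G" using A normal_imp_subgroup by blast
  have "\<exists>t\<in>A. \<exists>p::nat. Factorial_Ring.prime p \<and> t [^] p = \<one> \<and> t \<notin> C"
  proof (rule ccontr)
    assume none: "\<not> ?thesis"
    have "w \<in> generate G {a}" if "w \<in> A" "Factorial_Ring.prime q" "w [^] q = \<one>" for w and q :: nat
      using that none unfolding C_generate[symmetric] by blast
    then have "cyclic_group (subgroup_generated G A)"
      using cyclic_of_prime_exponent_in_cyclic[OF finite_carrier A_subgroup _ a_carrier] ab by blast
    with not_cyclic show False ..
  qed
  then obtain t and p :: nat where "t \<in> A" "Factorial_Ring.prime p" "t [^] p = \<one>" "t \<notin> C"
    by blast
  with A ab show thesis by (rule that)
qed

theorem roquette_of_no_expansive_subgroup: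
  assumes "\<not> (\<exists>T. expansive G T \<and> T \<noteq> {\<one>} \<and> core G (carrier G) T = {\<one>})"
  shows "roquette G"
proof (rule ccontr)
  assume "\<not> roquette G"
  then obtain A t and p :: nat where A: "A \<lhd> G" "\<forall>x\<in>A. \<forall>y\<in>A. x \<otimes> y = y \<otimes> x"
    and t: "t \<in> A" "Factorial_Ring.prime p" "t [^] p = \<one>" "t \<notin> C"
    by (rule obtain_prime_exponent_outside_C)
  have tc: "t \<in> carrier G" using subgroup.mem_carrier[OF normal_imp_subgroup[OF A(1)] t(1)] .
  have "expansive G (generate G {t})"
    using expansive_generate_prime_exponent[OF tc t(2-4) A(1) _ t(1)] A(2) by blast
  moreover have "core G (carrier G) (generate G {t}) = {\<one>}"
    by (rule core_generate_prime_exponent[OF tc t(2-4)])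
  moreover have "generate G {t} \<noteq> {\<one>}"
    using generate.incl[of t "{t}" G] t(4) subgroup.one_closed[OF C_subgroup] by auto
  ultimately show False using assms by blast
qed

lemma ord_a_pow_n_div:
  assumes "q dvd n"
  shows "ord (a [^] (n div q)) = q"
  using ord_pow_ord_div[OF a_carrier, of q] ord_a n_pos assms by simp

context
  fixes p :: nat
  assumes p: "Factorial_Ring.prime p" and sq_dvd: "p^2 dvd n" and two: "multiplicity (2::nat) n \<noteq> 2"
begin

private lemma two_p: "p = 2 \<Longrightarrow> multiplicity p n \<noteq> 2"
  using two by simp

private lemma p_dvd_n: "p dvd n"
  using sq_dvd by (simp add: power2_eq_square dvd_mult_left)

lemma pow_prime_in_C:
  assumes g: "g \<in> carrier G" and g_alpha: "acts_by_power g (alpha_exp n p)"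
  shows "g [^] p \<in> C"
proof (rule in_C_of_commutes)
  show "g [^] p \<in> carrier G" using g by simp
  fix c assume c: "c \<in> C"
  have "g [^] p \<otimes> c \<otimes> inv (g [^] p) = c [^] (alpha_exp n p ^ p)"
    using acts_by_power_pow[OF g_alpha g] c unfolding acts_by_power_def by simp
  also have "\<dots> = c"
    using C_pow_cong[OF c alpha_exp_pow_prime_cong_one[OF p n_pos sq_dvd two_p]] C_carrier[OF c] by simp
  finally show "g [^] p \<otimes> c = c \<otimes> g [^] p"
    using conj_eq_iff_commute[of "g [^] p" c] C_carrier[OF c] g by simp
qed

text \<open>Correcting \<open>g\<close> by a suitable element \<open>a\<^sup>i \<in> C\<close> yields an element of order \<open>p\<close>:
  \<open>(a\<^sup>i g)\<^sup>p = a\<^sup>i\<^sup>S g\<^sup>p\<close> with \<open>S = 1 + e + \<dots> + e\<^sup>p\<^sup>-\<^sup>1 = p s\<close>, \<open>s\<close> coprime to \<open>n\<close>, and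
  \<open>g\<^sup>p = a\<^sup>\<tau>\<close> with \<open>p \<bar> \<tau>\<close> since \<open>g\<close> centralizes \<open>g\<^sup>p\<close>.\<close>

lemma obtain_order_prime_lift:
  assumes g: "g \<in> carrier G" and g_alpha: "acts_by_power g (alpha_exp n p)"
  obtains y where "y \<in> carrier G" "acts_by_power y (alpha_exp n p)" "y [^] p = \<one>" "y \<notin> C"
proof -
  define e where "e = alpha_exp n p"
  obtain \<tau> :: nat where \<tau>: "g [^] p = a [^] \<tau>" using pow_prime_in_C[OF g g_alpha] mem_C_iff by blast
  have "g \<otimes> g [^] p \<otimes> inv g = g [^] p"
    using conj_eq_iff_commute[OF g] nat_pow_Suc2[OF g, of p] g by simp
  then have "(g [^] p) [^] e = g [^] p"
    using g_alpha pow_prime_in_C[OF g g_alpha] unfolding acts_by_power_def e_def by simp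
  then have "[\<tau> * e = \<tau>] (mod n)" using \<tau> a_carrier a_pow_eq_iff by (simp add: nat_pow_pow)
  then have "int n dvd int \<tau> * (int e - 1)"
    by (simp add: cong_int_iff[symmetric] cong_iff_dvd_diff algebra_simps)
  then have "int p dvd int \<tau>"
    using prime_dvd_of_dvd_mult_alpha_exp_minus_one[OF p n_pos sq_dvd two_p] unfolding e_def by blast
  then obtain \<tau>' where \<tau>': "\<tau> = p * \<tau>'" by (auto elim: dvdE simp: int_dvd_int_iff)
  obtain s where s: "(\<Sum>j<p. e ^ j) = p * s" and "coprime s n"
    using alpha_exp_geometric_sum[OF p n_pos sq_dvd two_p] unfolding e_def by blast
  then obtain x where x: "[s * x = 1] (mod n)" using cong_solve_coprime_nat by auto
  define i where "i = x * (n - \<tau>' mod n)"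
  have "[s * i = n - \<tau>' mod n] (mod n)"
    using cong_scalar_right[OF x, of "n - \<tau>' mod n"] by (simp add: i_def mult.assoc)
  moreover have "[\<tau>' = \<tau>' mod n] (mod n)" by (simp add: cong_def)
  ultimately have "[s * i + \<tau>' = (n - \<tau>' mod n) + \<tau>' mod n] (mod n)" by (rule cong_add)
  moreover have "(n - \<tau>' mod n) + \<tau>' mod n = n" using n_pos by (simp add: less_imp_le)
  ultimately have "n dvd s * i + \<tau>'" by (simp add: cong_def flip: cong_0_iff)
  define y where "y = a [^] i \<otimes> g"
  have yc: "y \<in> carrier G" unfolding y_def using a_carrier g by simp
  have ye: "acts_by_power y e"
    unfolding y_def e_def using acts_by_power_mult_C[OF g_alpha g] mem_C_iff by blast
  have "y [^] p = (a [^] i) [^] (\<Sum>j<p. e ^ j) \<otimes> g [^] p"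
    unfolding y_def e_def using mult_C_pow[OF g_alpha g] mem_C_iff by blast
  also have "\<dots> = a [^] (p * (s * i + \<tau>'))"
    unfolding s \<tau> \<tau>' using a_carrier by (simp add: nat_pow_pow nat_pow_mult algebra_simps)
  also have "\<dots> = \<one>"
    using \<open>n dvd s * i + \<tau>'\<close> a_carrier ord_a pow_eq_id by auto
  finally have "y [^] p = \<one>" .
  moreover have "y \<notin> C"
  proof
    assume "y \<in> C"
    then have "y \<otimes> a \<otimes> inv y = a" using C_comm[OF _ a_in_C] yc a_carrier by (simp add: m_assoc)
    then have "a [^] e = a [^] (1::nat)" using ye a_in_C a_carrier unfolding acts_by_power_def by simp
    then have "[e = 1] (mod n)" using a_pow_eq_iff by blast
    then show False using alpha_exp_not_cong_one[OF p n_pos sq_dvd two_p] unfolding e_def by blast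
  qed
  ultimately show thesis using that yc ye unfolding e_def by blast
qed

lemma conj_order_prime_lift:
  assumes y: "y \<in> carrier G" "acts_by_power y (alpha_exp n p)" "y [^] p = \<one>" and h: "h \<in> carrier G"
  obtains l :: nat where "h \<otimes> y \<otimes> inv h = (a [^] (n div p)) [^] l \<otimes> y"
proof -
  obtain u where u: "u \<in> C" "h \<otimes> y \<otimes> inv h = u \<otimes> y" using conj_eq_C_mult[OF y(1) h] .
  obtain j :: nat where j: "u = a [^] j" using u(1) mem_C_iff by blast
  obtain s where s: "(\<Sum>j<p. alpha_exp n p ^ j) = p * s" and "coprime s n"
    using alpha_exp_geometric_sum[OF p n_pos sq_dvd two_p] by blast
  have "(u \<otimes> y) [^] p = \<one>" using conj_nat_pow[OF h y(1), of p] u(2) y(3) h by simp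
  moreover have "(u \<otimes> y) [^] p = u [^] (p * s) \<otimes> y [^] p"
    using mult_C_pow[OF y(2) y(1) u(1)] s by simp
  ultimately have "a [^] (j * p * s) = \<one>" using y(3) j a_carrier by (simp add: nat_pow_pow mult.assoc)
  then have "n dvd j * p * s" using a_carrier ord_a pow_eq_id by auto
  moreover have "coprime n s" using \<open>coprime s n\<close> by (rule coprime_commute[THEN iffD1])
  ultimately have "n dvd j * p" by (simp add: coprime_dvd_mult_left_iff)
  then have "u [^] p = \<one>" using j a_carrier by (simp add: nat_pow_pow pow_eq_id ord_a)
  then obtain l :: nat where "u = (a [^] (n div p)) [^] l"
    using obtain_pow_of_pow_eq_one_in_generate[OF finite_carrier a_carrier _ _ _ \<open>u [^] p = \<one>\<close>]
      p_dvd_n prime_gt_0_nat[OF p] u(1) C_generate ord_a by blast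
  then have "h \<otimes> y \<otimes> inv h = (a [^] (n div p)) [^] l \<otimes> y" using u(2) by simp
  then show thesis by (rule that)
qed

lemma commute_order_prime_lift:
  assumes y: "y \<in> carrier G" "acts_by_power y (alpha_exp n p)"
  shows "y \<otimes> a [^] (n div p) = a [^] (n div p) \<otimes> y"
proof -
  have "y \<otimes> a [^] (n div p) \<otimes> inv y = a [^] (n div p * alpha_exp n p)"
    using y(2) a_in_C C_pow_closed a_carrier unfolding acts_by_power_def by (simp add: nat_pow_pow)
  also have "\<dots> = a [^] (n div p)"
    using a_pow_eq_iff alpha_exp_fixes_order_prime[OF p n_pos sq_dvd two_p] by blast
  finally show ?thesis using conj_eq_iff_commute y(1) a_carrier by simp
qed

lemma power_products_normal:
  assumes y: "y \<in> carrier G" "acts_by_power y (alpha_exp n p)" "y [^] p = \<one>"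
  shows "power_products G (a [^] (n div p)) y \<lhd> G"
proof -
  define z where "z = a [^] (n div p)"
  have zC: "z \<in> C" and zc: "z \<in> carrier G" unfolding z_def using mem_C_iff a_carrier by auto
  have zp: "z [^] p = \<one>"
    using pow_ord_eq_1[OF zc] ord_a_pow_n_div[OF p_dvd_n] unfolding z_def by simp
  have zy: "z \<otimes> y = y \<otimes> z" unfolding z_def using commute_order_prime_lift[OF y(1,2)] by simp
  show ?thesis unfolding z_def[symmetric]
  proof (rule normal_invI[OF subgroup_power_products[OF zc y(1) zy zp y(3)]])
    show "p \<ge> 1" using prime_gt_0_nat[OF p] by simp
    fix h w assume h: "h \<in> carrier G" and "w \<in> power_products G z y"
    then obtain i j :: nat where w: "w = z [^] i \<otimes> y [^] j" unfolding power_products_def by blast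
    obtain l :: nat where l: "h \<otimes> y \<otimes> inv h = z [^] l \<otimes> y"
      using conj_order_prime_lift[OF y h] unfolding z_def by blast
    obtain r where "acts_by_power h r" using exists_acts_by_power[OF h] by blast
    then have r: "h \<otimes> z \<otimes> inv h = z [^] r" using zC unfolding acts_by_power_def by simp
    have "h \<otimes> w \<otimes> inv h = (h \<otimes> z [^] i \<otimes> inv h) \<otimes> (h \<otimes> y [^] j \<otimes> inv h)"
      unfolding w using h zc y(1) by (simp add: m_assoc)
    also have "\<dots> = (z [^] r) [^] i \<otimes> (z [^] l \<otimes> y) [^] j"
      using conj_nat_pow[OF h zc, of i] conj_nat_pow[OF h y(1), of j] l r by simp
    also have "(z [^] l \<otimes> y) [^] j = (z [^] l) [^] j \<otimes> y [^] j"
      using pow_mult_distrib[of "z [^] l" y j] commute_nat_pow[OF zc y(1) zy, of l 1] zc y(1) by simp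
    also have "(z [^] r) [^] i \<otimes> ((z [^] l) [^] j \<otimes> y [^] j) = z [^] (r * i + l * j) \<otimes> y [^] j"
      using zc y(1) by (simp add: m_assoc nat_pow_pow nat_pow_mult[symmetric])
    finally show "h \<otimes> w \<otimes> inv h \<in> power_products G z y" unfolding power_products_def by blast
  qed
qed

theorem alpha_notin_image_of_roquette:
  assumes "roquette G"
  shows "\<not> in_image_pi G C (alpha_aut G C p)"
proof
  assume "in_image_pi G C (alpha_aut G C p)"
  then obtain g where g: "g \<in> carrier G" and "\<forall>c\<in>C. g \<otimes> c \<otimes> inv g = alpha_aut G C p c"
    unfolding in_image_pi_def by blast
  then have "acts_by_power g (alpha_exp n p)" unfolding acts_by_power_def alpha_aut_def card_C by simp
  then obtain y where y: "y \<in> carrier G" "acts_by_power y (alpha_exp n p)" "y [^] p = \<one>" "y \<notin> C"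
    using obtain_order_prime_lift[OF g] by blast
  define z where "z = a [^] (n div p)"
  have zc: "z \<in> carrier G" and "generate G {z} \<subseteq> C"
    unfolding z_def using a_carrier C_generate mem_C_iff mem_generate_singleton_iff[OF finite_carrier]
    by (auto simp: nat_pow_pow)
  have zy: "z \<otimes> y = y \<otimes> z" unfolding z_def using commute_order_prime_lift[OF y(1,2)] by simp
  have "y [^] ord z = \<one>" unfolding z_def using ord_a_pow_n_div[OF p_dvd_n] y(3) by simp
  then have "\<not> cyclic_group (subgroup_generated G (power_products G z y))"
    using power_products_not_cyclic[OF finite_carrier zc y(1) zy] y(4) \<open>generate G {z} \<subseteq> C\<close> by blast
  moreover have "power_products G z y \<lhd> G" unfolding z_def using power_products_normal[OF y(1-3)] .
  ultimately show False
    using \<open>roquette G\<close> power_products_comm[OF zc y(1) zy] unfolding roquette_def by blast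
qed

end

end

theorem mainTheorem8:
  fixes G (structure) and C :: "'a set" and n :: nat
  assumes "group G" and "finite (carrier G)"
    and "C \<lhd> G" and "cyclic_group (subgroup_generated G C)" and "card C = n"
    and "centralizer G C = C"
    and "multiplicity (2::nat) n \<noteq> 2"
  shows
    "(roquette G \<longrightarrow>
        (\<forall>p::nat. Factorial_Ring.prime p \<and> p\<^sup>2 dvd n \<longrightarrow> \<not> in_image_pi G C (alpha_aut G C p)))
   \<and> ((\<forall>p::nat. Factorial_Ring.prime p \<and> p\<^sup>2 dvd n \<longrightarrow>
         \<not> (\<exists>g\<in>carrier G. \<forall>x\<in>sylow_part G C p.
               g \<otimes> x \<otimes> inv g = x [^] (1 + p ^ (multiplicity p n - 1))))
       \<longrightarrow> \<not> (\<exists>T. expansive G T \<and> T \<noteq> {\<one>} \<and> core G (carrier G) T = {\<one>}))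
   \<and> (\<not> (\<exists>T. expansive G T \<and> T \<noteq> {\<one>} \<and> core G (carrier G) T = {\<one>})
       \<longrightarrow> roquette G)"
proof -
  interpret group G by (rule assms(1))
  have C: "subgroup C G" using assms(3) normal_imp_subgroup by blast
  obtain a where "a \<in> C" "C = generate G {a}" using cyclic_group_subgroup_generated_iff[OF C] assms(4) by blast
  then have "cyclic_self_centralizing G C a n"
    using assms(1-3,5,6) subgroup.mem_carrier[OF C]
    unfolding cyclic_self_centralizing_def cyclic_self_centralizing_axioms_def by blast
  then interpret cyclic_self_centralizing G C a n .
  show ?thesis
    using alpha_notin_image_of_roquette no_expansive_subgroup[OF assms(7)]
      roquette_of_no_expansive_subgroup assms(7) by blast
qed

end
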